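(* Let $q\in(0,1)$ and let $\ell^1(h)$ be the $L^1$-algebra associated with the little $q$-Legendre polynomials $(R_n(x;q))_{n\in\mathbb{N}_0}$. Then the linear span of the idempotents of $\ell^1(h)$ is dense in $\ell^1(h)$.
   Context: For $q\in(0,1)$, the little $q$-Legendre polynomials are defined by $R_0(x;q)=1$, $R_1(x;q)=(x-b_0)/a_0$ and $R_1(x;q)R_n(x;q)=a_nR_{n+1}(x;q)+b_nR_n(x;q)+c_nR_{n-1}(x;q)$ for $n\ge1$, where $a_0=\frac{1}{q+1}$, $b_0=\frac{q}{q+1}$, and for $n\ge1$: $a_n=q^n\frac{(1+q)(1-q^{n+1})}{(1-q^{2n+1})(1+q^{n+1})}$, $c_n=q^n\frac{(1+q)(1-q^n)}{(1-q^{2n+1})(1+q^n)}$, $b_n=1-a_n-c_n$. One has linearization formulas $R_m(x;q)R_n(x;q)=\sum_{k=|m-n|}^{m+n}g(m,n;k)R_k(x;q)$ with $g(m,n;k)\ge0$ (and $\sum_k g(m,n;k)=1$). Let $h(n)=\frac{1}{q^n}\frac{1-q^{2n+1}}{1-q}$ (equivalently $h(n)=1/g(n,n;0)$). For $f:\mathbb{N}_0\to\mathbb{C}$ and $n\in\mathbb{N}_0$ let $T_nf(m)=\sum_{k=|m-n|}^{m+n}g(m,n;k)f(k)$. The space $\ell^1(h)=\{f:\mathbb{N}_0\to\mathbb{C}:\|f\|_1=\sum_k|f(k)|h(k)<\infty\}$ with the convolution $f\ast g(n)=\sum_{k=0}^\infty T_nf(k)g(k)h(k)$ and involution given by complex conjugation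 is a commutative Banach $\ast$-algebra with unit $\delta_0$ (the $L^1$-algebra). An idempotent is $f\in\ell^1(h)$ with $f\ast f=f$. *)

theory Defs
  imports "HOL-Analysis.Analysis" "HOL-Computational_Algebra.Polynomial"
begin

definition lqa :: "real \<Rightarrow> nat \<Rightarrow> real" where
  "lqa q n = (if n = 0 then 1 / (q + 1)
     else q ^ n * ((1 + q) * (1 - q ^ (n + 1))) / ((1 - q ^ (2 * n + 1)) * (1 + q ^ (n + 1))))"

definition lqc :: "real \<Rightarrow> nat \<Rightarrow> real" where
  "lqc q n = (if n = 0 then 0
     else q ^ n * ((1 + q) * (1 - q ^ n)) / ((1 - q ^ (2 * n + 1)) * (1 + q ^ n)))"

definition lqb :: "real \<Rightarrow> nat \<Rightarrow> real" where
  "lqb q n = (if n = 0 then q / (q + 1) else 1 - lqa q n - lqc q n)"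

fun lqR :: "real \<Rightarrow> nat \<Rightarrow> real poly" where
  "lqR q 0 = 1"
| "lqR q (Suc 0) = smult (1 / lqa q 0) [:- lqb q 0, 1:]"
| "lqR q (Suc (Suc n)) =
     smult (1 / lqa q (Suc n))
       (lqR q 1 * lqR q (Suc n) - smult (lqb q (Suc n)) (lqR q (Suc n))
          - smult (lqc q (Suc n)) (lqR q n))"

definition lqg :: "real \<Rightarrow> nat \<Rightarrow> nat \<Rightarrow> nat \<Rightarrow> real" where
  "lqg q m n = (THE c. (\<forall>k > m + n. c k = 0) \<and>
       lqR q m * lqR q n = (\<Sum>k\<le>m + n. smult (c k) (lqR q k)))"

definition lqh :: "real \<Rightarrow> nat \<Rightarrow> real" where
  "lqh q n = (1 / q ^ n) * ((1 - q ^ (2 * n + 1)) / (1 - q))"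

definition absdiff :: "nat \<Rightarrow> nat \<Rightarrow> nat" where
  "absdiff m n = (if n \<le> m then m - n else n - m)"

definition lqT :: "real \<Rightarrow> nat \<Rightarrow> (nat \<Rightarrow> complex) \<Rightarrow> nat \<Rightarrow> complex" where
  "lqT q n f m = (\<Sum>k = absdiff m n..m + n. complex_of_real (lqg q m n k) * f k)"

definition l1h :: "real \<Rightarrow> (nat \<Rightarrow> complex) set" where
  "l1h q = {f. summable (\<lambda>k. norm (f k) * lqh q k)}"

definition norm1 :: "real \<Rightarrow> (nat \<Rightarrow> complex) \<Rightarrow> real" where
  "norm1 q f = (\<Sum>k. norm (f k) * lqh q k)"

definition lqconv :: "real \<Rightarrow> (nat \<Rightarrow> complex) \<Rightarrow> (nat \<Rightarrow> complex) \<Rightarrow> nat \<Rightarrow> complex" where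
  "lqconv q f g n = (\<Sum>k. lqT q n f k * g k * complex_of_real (lqh q k))"

definition idempotent_l1 :: "real \<Rightarrow> (nat \<Rightarrow> complex) \<Rightarrow> bool" where
  "idempotent_l1 q f \<longleftrightarrow> f \<in> l1h q \<and> lqconv q f f = f"

end

(* The little q-Legendre polynomials are orthogonal for the discrete measure with mass
   (1 - q) q^j at the nodes 1 - q^j.  At a node y the character n |-> R_n(y) is square summable
   against h, because a dual expansion of R_n at the nodes gives |R_n(1 - q^j)| <= C q^(2(n-j));
   divided by its squared norm it is an idempotent of l^1(h), since translation by n multiplies a
   character by R_n(y).  Orthogonality writes g(m,m;0) delta_m - delta_0 as the series over j of
   (R_m(1 - q^j) - 1) (1 - q) q^j R_.(1 - q^j), whose terms are multiples of these idempotents and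
   whose tails tend to 0 in l^1(h) because R_m(1 - q^j) - 1 = O(q^j).  So every delta_m, and hence
   every element of l^1(h), lies in the closed linear span of the idempotents. *)

theory Submission
  imports Defs
begin

text \<open>The recurrence \<open>expansion_coeff_recurrence\<close> below, divided by its common factor and
  written in the variables \<open>Q = q\<^sup>m\<close> and \<open>K = q\<^sup>k\<close>.\<close>

lemma expansion_coeff_identity:
  fixes q Q K :: real
  assumes "q \<noteq> 0" "Q \<noteq> 0" "K \<noteq> 0" "1 - q*Q*Q \<noteq> 0" "1 + q*Q \<noteq> 0" "1 + Q \<noteq> 0" "1 - q*K \<noteq> 0"
  shows "(Q*(1+q)*(1-q*Q)/((1-q*Q*Q)*(1+q*Q))) * ((-q*K/(1-q*K)^2) * ((1-Q*K*q)*(1-Q*K*q*q)/(q*K*Q))) =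
    (Q*(1+q)*(1-q*Q)/((1-q*Q*Q)*(1+q*Q)) + Q*(1+q)*(1-Q)/((1-q*Q*Q)*(1+Q))) * ((-q*K/(1-q*K)^2) * ((K-Q)*(1-Q*K*q)/(Q*K)))
     - (1+q) - (Q*(1+q)*(1-Q)/((1-q*Q*Q)*(1+Q))) * ((-q*K/(1-q*K)^2) * ((K-Q)*(q*K-Q)/(Q*K)))"
proof -
  have cleared: "(Q*(1+q)*(1-q*Q)/(D1*D2)) * ((-q*K/D4^2) * ((1-Q*K*q)*(1-Q*K*q*q)/(q*K*Q))) -
      ((Q*(1+q)*(1-q*Q)/(D1*D2) + Q*(1+q)*(1-Q)/(D1*D3)) * ((-q*K/D4^2) * ((K-Q)*(1-Q*K*q)/(Q*K)))
        - (1+q) - (Q*(1+q)*(1-Q)/(D1*D3)) * ((-q*K/D4^2) * ((K-Q)*(q*K-Q)/(Q*K))))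
    = - (1+q) * ((1-q*Q)*D3*(1-Q*K*q)*(1-Q*K*q*q) - q*((1-q*Q)*D3+(1-Q)*D2)*(K-Q)*(1-Q*K*q)
        - D4^2*D1*D2*D3 + q*(1-Q)*D2*(K-Q)*(q*K-Q)) / (D1*D2*D3*D4^2)"
    if "D1 \<noteq> 0" "D2 \<noteq> 0" "D3 \<noteq> 0" "D4 \<noteq> 0" for D1 D2 D3 D4 :: real
    using that assms(1-3) by (simp add: field_simps)
  have "(1-q*Q)*(1+Q)*(1-Q*K*q)*(1-Q*K*q*q) - q*((1-q*Q)*(1+Q)+(1-Q)*(1+q*Q))*(K-Q)*(1-Q*K*q)
      - (1-q*K)^2*(1-q*Q*Q)*(1+q*Q)*(1+Q) + q*(1-Q)*(1+q*Q)*(K-Q)*(q*K-Q) = 0"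
    by algebra
  then show ?thesis
    using cleared[of "1-q*Q*Q" "1+q*Q" "1+Q" "1-q*K"] assms(4-7) by simp
qed

lemma exp_neg_div_le_one_minus:
  fixes x c :: real
  assumes "0 \<le> x" "x \<le> c" "c < 1"
  shows "exp (- x / (1 - c)) \<le> 1 - x"
proof -
  have x1: "x < 1" using assms by simp
  have "1 / (1 - x) = 1 + x / (1 - x)"
    using x1 by (simp add: field_simps)
  also have "\<dots> \<le> exp (x / (1 - x))"
    by (rule exp_ge_add_one_self)
  finally have "exp (- (x / (1 - x))) \<le> 1 - x"
    using x1 by (simp add: exp_minus inverse_eq_divide field_simps)
  moreover have "x / (1 - x) \<le> x / (1 - c)"
    using assms x1 by (intro divide_left_mono) auto
  then have "exp (- x / (1 - c)) \<le> exp (- (x / (1 - x)))"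
    by simp
  ultimately show ?thesis by linarith
qed

lemma smult_sum_right: "smult a (\<Sum>i\<in>S. f i) = (\<Sum>i\<in>S. smult a (f i))"
  by (induct S rule: infinite_finite_induct) (auto simp: smult_add_right)

lemma sum_lessThan_add_split: "(\<Sum>i<a+(b::nat). f i) = (\<Sum>i<a. f i) + (\<Sum>i<b. f (a+i))"
  by (induction b) (simp_all add: add.assoc)

lemma weighted_series_norm_le:
  fixes a :: "nat \<Rightarrow> real" and u :: "nat \<Rightarrow> nat \<Rightarrow> real" and w :: "nat \<Rightarrow> real"
  assumes a: "summable (\<lambda>i. \<bar>a i\<bar>)" and w: "\<And>n. 0 \<le> w n"
    and u_bounded: "\<And>i n. \<bar>u i n\<bar> \<le> M"
    and u_norm: "\<And>i K. (\<Sum>n<K. \<bar>u i n\<bar> * w n) \<le> C"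
  shows "summable (\<lambda>n. \<bar>\<Sum>i. a i * u i n\<bar> * w n)"
    and "(\<Sum>n. \<bar>\<Sum>i. a i * u i n\<bar> * w n) \<le> C * (\<Sum>i. \<bar>a i\<bar>)"
proof -
  have term_summable: "summable (\<lambda>i. \<bar>a i\<bar> * \<bar>u i n\<bar>)" for n
    using a u_bounded by (intro summable_comparison_test'[OF summable_mult2[OF a, of M], of 0])
      (simp add: abs_mult mult_left_mono)
  have pointwise: "\<bar>\<Sum>i. a i * u i n\<bar> \<le> (\<Sum>i. \<bar>a i\<bar> * \<bar>u i n\<bar>)" for n
    using summable_rabs[of "\<lambda>i. a i * u i n"] term_summable[of n] by (simp add: abs_mult)
  have partial: "(\<Sum>n<K. \<bar>\<Sum>i. a i * u i n\<bar> * w n) \<le> C * (\<Sum>i. \<bar>a i\<bar>)" for K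
  proof -
    have "(\<Sum>n<K. \<bar>\<Sum>i. a i * u i n\<bar> * w n) \<le> (\<Sum>n<K. (\<Sum>i. \<bar>a i\<bar> * \<bar>u i n\<bar>) * w n)"
      using pointwise w by (intro sum_mono mult_right_mono) auto
    also have "\<dots> = (\<Sum>n<K. \<Sum>i. \<bar>a i\<bar> * \<bar>u i n\<bar> * w n)"
      by (intro sum.cong refl) (rule suminf_mult2[OF term_summable])
    also have "\<dots> = (\<Sum>i. \<Sum>n<K. \<bar>a i\<bar> * \<bar>u i n\<bar> * w n)"
      by (rule suminf_sum[symmetric]) (intro summable_mult2 term_summable)
    also have "\<dots> \<le> (\<Sum>i. \<bar>a i\<bar> * C)"
    proof (rule suminf_le)
      show "(\<Sum>n<K. \<bar>a i\<bar> * \<bar>u i n\<bar> * w n) \<le> \<bar>a i\<bar> * C" for i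
        unfolding mult.assoc sum_distrib_left[symmetric] using u_norm by (intro mult_left_mono) auto
      show "summable (\<lambda>i. \<Sum>n<K. \<bar>a i\<bar> * \<bar>u i n\<bar> * w n)"
        by (intro summable_sum summable_mult2 term_summable)
      show "summable (\<lambda>i. \<bar>a i\<bar> * C)"
        using a by (rule summable_mult2)
    qed
    also have "\<dots> = C * (\<Sum>i. \<bar>a i\<bar>)"
      using suminf_mult2[OF a, of C] by (simp add: mult.commute)
    finally show ?thesis .
  qed
  show summable: "summable (\<lambda>n. \<bar>\<Sum>i. a i * u i n\<bar> * w n)"
    using w partial by (intro summableI_nonneg_bounded) auto
  show "(\<Sum>n. \<bar>\<Sum>i. a i * u i n\<bar> * w n) \<le> C * (\<Sum>i. \<bar>a i\<bar>)"
    using summable partial by (rule suminf_le_const)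
qed

locale little_q_legendre =
  fixes q :: real
  assumes q_pos: "0 < q" and q_less_1: "q < 1"
begin

abbreviation R :: "nat \<Rightarrow> real \<Rightarrow> real" where "R n x \<equiv> poly (lqR q n) x"

lemma q_nonzero [simp]: "q \<noteq> 0"
  using q_pos by simp

lemma q_power_pos [simp]: "0 < q ^ n"
  using q_pos by simp

lemma q_power_nonneg [simp]: "0 \<le> q ^ n"
  using q_pos by simp

lemma q_power_le_1: "q ^ n \<le> 1"
  using q_pos q_less_1 by (simp add: power_le_one)

lemma q_power_less_1: "0 < n \<Longrightarrow> q ^ n < 1"
  using q_pos q_less_1 by (simp add: power_less_one_iff)

lemma q_power_antimono: "a \<le> b \<Longrightarrow> q ^ b \<le> q ^ a"
  using q_pos q_less_1 by (intro power_decreasing) auto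

section \<open>Recurrence coefficients and the expansion of \<open>R n\<close> around \<open>1\<close>\<close>

lemma lqa_pos: "0 < lqa q m"
proof (cases "m = 0")
  case True
  then show ?thesis using q_pos by (simp add: lqa_def)
next
  case False
  have "q * q ^ m < 1" "q * q ^ (2 * m) < 1"
    using q_power_less_1[of "Suc m"] q_power_less_1[of "Suc (2 * m)"] by simp_all
  moreover have "0 < 1 + q * q ^ m"
    using q_power_pos[of "Suc m"] by simp
  ultimately show ?thesis
    using False q_pos by (simp add: lqa_def)
qed

lemma lqa_nonzero: "lqa q m \<noteq> 0"
  using lqa_pos[of m] by simp

lemma R_1: "R 1 x = (q + 1) * x - q"
  using q_pos by (simp add: lqa_def lqb_def field_simps)

lemma R_Suc:
  assumes "1 \<le> m"
  shows "lqa q m * R (Suc m) x = (R 1 x - lqb q m) * R m x - lqc q m * R (m - 1) x"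
proof -
  obtain n where "m = Suc n" using assms by (cases m) auto
  then show ?thesis using lqa_nonzero[of m] by (simp add: field_simps)
qed

lemma lqa_plus_lqc: "1 \<le> m \<Longrightarrow> 1 - lqb q m = lqa q m + lqc q m"
  by (simp add: lqb_def)

lemma lqa_eq: "1 \<le> m \<Longrightarrow> lqa q m = q^m * (1+q) * (1 - q*q^m) / ((1 - q*q^m*q^m) * (1 + q*q^m))"
  by (simp add: lqa_def mult_2 power_add mult.assoc)

lemma lqc_eq: "1 \<le> m \<Longrightarrow> lqc q m = q^m * (1+q) * (1 - q^m) / ((1 - q*q^m*q^m) * (1 + q^m))"
  by (simp add: lqc_def mult_2 power_add mult.assoc)

definition eigenvalue :: "nat \<Rightarrow> real" where
  "eigenvalue n = (1 - q^n) * (1 - q^(n+1)) / q^n"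

lemma eigenvalue_0 [simp]: "eigenvalue 0 = 0"
  by (simp add: eigenvalue_def)

lemma eigenvalue_diff: "eigenvalue a - eigenvalue b = (1/q^a - 1/q^b) * (1 - q^(a+b+1))"
  by (simp add: eigenvalue_def power_add field_simps)

text \<open>The coefficients of \<open>R n (1 - t)\<close> as a polynomial in \<open>t\<close> form a terminating basic
  hypergeometric series: up to signs and powers of \<open>q\<close>, \<open>qpoch_inv n k\<close> and \<open>qpoch_shift n k\<close>
  are the \<open>q\<close>-Pochhammer symbols \<open>(q\<^sup>-\<^sup>n; q)\<^sub>k\<close> and \<open>(q\<^sup>n\<^sup>+\<^sup>1; q)\<^sub>k\<close>, and \<open>hyp_weight k\<close>
  carries \<open>1/(q; q)\<^sub>k\<^sup>2\<close>.\<close>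

definition qpoch_inv :: "nat \<Rightarrow> nat \<Rightarrow> real" where
  "qpoch_inv n k = (\<Prod>i<k. 1/q^n - 1/q^i)"

definition qpoch_shift :: "nat \<Rightarrow> nat \<Rightarrow> real" where
  "qpoch_shift n k = (\<Prod>i<k. 1 - q^(n+i+1))"

definition hyp_weight :: "nat \<Rightarrow> real" where
  "hyp_weight k = (\<Prod>i<k. - (q^(i+1)) / (1 - q^(i+1))^2)"

definition expansion_coeff :: "nat \<Rightarrow> nat \<Rightarrow> real" where
  "expansion_coeff n k = hyp_weight k * qpoch_inv n k * qpoch_shift n k"

lemma qpoch_inv_0 [simp]: "qpoch_inv n 0 = 1"
  by (simp add: qpoch_inv_def)

lemma qpoch_shift_0 [simp]: "qpoch_shift n 0 = 1"
  by (simp add: qpoch_shift_def)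

lemma hyp_weight_0 [simp]: "hyp_weight 0 = 1"
  by (simp add: hyp_weight_def)

lemma expansion_coeff_0 [simp]: "expansion_coeff n 0 = 1"
  by (simp add: expansion_coeff_def)

lemma qpoch_inv_Suc: "qpoch_inv n (Suc k) = qpoch_inv n k * (1/q^n - 1/q^k)"
  by (simp add: qpoch_inv_def)

lemma qpoch_shift_Suc: "qpoch_shift n (Suc k) = qpoch_shift n k * (1 - q^(n+k+1))"
  by (simp add: qpoch_shift_def)

lemma hyp_weight_Suc: "hyp_weight (Suc k) = hyp_weight k * (- (q^(k+1)) / (1 - q^(k+1))^2)"
  by (simp add: hyp_weight_def)

lemma expansion_coeff_eq_0: "n < k \<Longrightarrow> expansion_coeff n k = 0"
  unfolding expansion_coeff_def qpoch_inv_def by (subst prod_zero) auto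

lemma expansion_coeff_Suc:
  "expansion_coeff n (Suc k) =
     expansion_coeff n k * (- (q^(k+1)) / (1 - q^(k+1))^2) * (eigenvalue n - eigenvalue k)"
  unfolding expansion_coeff_def qpoch_inv_Suc qpoch_shift_Suc hyp_weight_Suc eigenvalue_diff
  by (simp only: mult_ac)

lemma qpoch_inv_Suc_Suc: "qpoch_inv (Suc n) (Suc k) = (1/q^(k+1)) * (1/q^n - q) * qpoch_inv n k"
proof (induction k)
  case 0
  then show ?case by (simp add: qpoch_inv_def field_simps)
next
  case (Suc k)
  have "qpoch_inv (Suc n) (Suc (Suc k))
      = (1/q^(k+1)) * (1/q^n - q) * qpoch_inv n k * (1/q^(Suc n) - 1/q^(Suc k))"
    using Suc by (simp only: qpoch_inv_Suc[of _ "Suc k"])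
  also have "\<dots> = (1/q^(Suc k+1)) * (1/q^n - q) * (qpoch_inv n k * (1/q^n - 1/q^k))"
    by (simp add: field_simps)
  finally show ?case by (simp add: qpoch_inv_Suc)
qed

lemma qpoch_inv_Suc_left:
  "qpoch_inv n k * (1/q^(Suc n) - 1) = q^k * qpoch_inv (Suc n) k * (1/q^(Suc n) - 1/q^k)"
proof (induction k)
  case (Suc k)
  have "qpoch_inv n (Suc k) * (1/q^(Suc n) - 1)
      = q^k * qpoch_inv (Suc n) k * (1/q^(Suc n) - 1/q^k) * (1/q^n - 1/q^k)"
    using Suc by (simp add: qpoch_inv_Suc mult.commute mult.left_commute)
  also have "\<dots> = q^(Suc k) * (qpoch_inv (Suc n) k * (1/q^(Suc n) - 1/q^k)) * (1/q^(Suc n) - 1/q^(Suc k))"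
    by (simp add: field_simps)
  finally show ?case by (simp add: qpoch_inv_Suc)
qed simp

lemma qpoch_shift_Suc_Suc:
  "qpoch_shift (Suc n) (Suc k) * (1 - q^(n+1)) = qpoch_shift n k * (1 - q^(n+k+1)) * (1 - q^(n+k+2))"
proof (induction k)
  case (Suc k)
  have "qpoch_shift (Suc n) (Suc (Suc k)) * (1 - q^(n+1))
      = (qpoch_shift (Suc n) (Suc k) * (1 - q^(n+1))) * (1 - q^(Suc n + Suc k + 1))"
    by (simp add: qpoch_shift_Suc)
  also have "\<dots> = qpoch_shift n k * (1 - q^(n+k+1)) * (1 - q^(n+k+2)) * (1 - q^(Suc n + Suc k + 1))"
    using Suc by simp
  finally show ?case by (simp add: qpoch_shift_Suc)
qed (simp add: qpoch_shift_def)

lemma qpoch_shift_Suc_left: "qpoch_shift n k * (1 - q^(n+1+k)) = (1 - q^(n+1)) * qpoch_shift (Suc n) k"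
proof (induction k)
  case (Suc k)
  have "qpoch_shift n (Suc k) * (1 - q^(n+1+Suc k))
      = (qpoch_shift n k * (1 - q^(n+1+k))) * (1 - q^(n+1+Suc k))"
    by (simp add: qpoch_shift_Suc)
  also have "\<dots> = (1 - q^(n+1)) * qpoch_shift (Suc n) k * (1 - q^(n+1+Suc k))"
    using Suc by simp
  finally show ?case by (simp add: qpoch_shift_Suc)
qed simp

lemma expansion_coeff_Suc_right:
  "expansion_coeff m (Suc k) =
     expansion_coeff m k * (-q*q^k / (1 - q*q^k)^2) * ((q^k - q^m) * (1 - q^m*q^k*q) / (q^m*q^k))"
  unfolding expansion_coeff_Suc eigenvalue_diff by (simp add: power_add field_simps)

lemma expansion_coeff_Suc_Suc:
  "expansion_coeff (Suc m) (Suc k) =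
     expansion_coeff m k * (-q*q^k / (1 - q*q^k)^2) * ((1 - q^m*q^k*q) * (1 - q^m*q^k*q*q) / (q*q^k*q^m))"
proof -
  have "1 - q*q^m \<noteq> 0"
    using q_power_less_1[of "Suc m"] by simp
  moreover have "qpoch_shift (Suc m) (Suc k) * (1 - q*q^m) = qpoch_shift m k * (1 - q^m*q^k*q) * (1 - q^m*q^k*q*q)"
    using qpoch_shift_Suc_Suc[of m k] by (simp add: power_add mult_ac)
  ultimately have shift:
    "qpoch_shift (Suc m) (Suc k) = qpoch_shift m k * (1 - q^m*q^k*q) * (1 - q^m*q^k*q*q) / (1 - q*q^m)"
    by (simp add: field_simps)
  have "1 - q*q^k \<noteq> 0"
    using q_power_less_1[of "Suc k"] by simp
  with \<open>1 - q*q^m \<noteq> 0\<close> show ?thesis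
    unfolding expansion_coeff_def hyp_weight_Suc qpoch_inv_Suc_Suc shift by (simp add: field_simps)
qed

lemma expansion_coeff_Suc_left:
  "expansion_coeff m (Suc k) =
     expansion_coeff (Suc m) k * (-q*q^k / (1 - q*q^k)^2) * ((q^k - q*q^m) * (q*q^k - q*q^m) / (q*q^m*q^k))"
proof -
  define Q where "Q = q * q^m"
  define K where "K = q^k"
  have Q: "0 < Q" "Q < 1"
    using q_power_pos[of "Suc m"] q_power_less_1[of "Suc m"] by (auto simp: Q_def)
  have "1/Q - 1 \<noteq> 0"
    using Q by (simp add: field_simps)
  moreover have "qpoch_inv m (Suc k) * (1/Q - 1) = q*K * qpoch_inv (Suc m) k * (1/Q - 1/K) * (1/Q - 1/(q*K))"
    using qpoch_inv_Suc_left[of m "Suc k"] by (simp add: Q_def K_def qpoch_inv_Suc)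
  ultimately have inv: "qpoch_inv m (Suc k) = q*K * qpoch_inv (Suc m) k * (1/Q - 1/K) * (1/Q - 1/(q*K)) / (1/Q - 1)"
    by (simp add: field_simps)
  have "1 - q^(m+k+2) \<noteq> 0"
    using q_power_less_1[of "m+k+2"] by simp
  moreover have "qpoch_shift m (Suc k) * (1 - q^(m+k+2)) = (1 - Q) * qpoch_shift (Suc m) k * (1 - q^(m+k+2))"
    using qpoch_shift_Suc_left[of m "Suc k"] by (simp add: Q_def qpoch_shift_Suc)
  ultimately have shift: "qpoch_shift m (Suc k) = (1 - Q) * qpoch_shift (Suc m) k"
    by simp
  have "1 - q*K \<noteq> 0"
    using q_power_less_1[of "Suc k"] by (simp add: K_def)
  with Q \<open>1/Q - 1 \<noteq> 0\<close> show ?thesis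
    unfolding expansion_coeff_def hyp_weight_Suc inv shift Q_def[symmetric] K_def[symmetric]
    by (simp add: K_def field_simps)
qed

lemma expansion_coeff_recurrence:
  assumes m: "1 \<le> m"
  shows "lqa q m * expansion_coeff (Suc m) k =
           (1 - lqb q m) * expansion_coeff m k - (if k = 0 then 0 else (1+q) * expansion_coeff m (k-1))
           - lqc q m * expansion_coeff (m-1) k"
proof (cases k)
  case 0
  then show ?thesis using m by (simp add: lqa_plus_lqc)
next
  case (Suc k')
  obtain p where mp: "m = Suc p" using m by (cases m) auto
  define Q where "Q = q^m"
  define K where "K = q^k'"
  define e where "e = -q*K / (1 - q*K)^2"
  define X where "X = expansion_coeff m k'"
  have Q: "0 < Q" "Q < 1" "q*Q < 1"
    using q_power_less_1[of m] q_power_less_1[of "Suc m"] m by (auto simp: Q_def)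
  have K: "0 < K" "q*K < 1"
    using q_power_less_1[of "Suc k'"] by (auto simp: K_def)
  have "q*Q*Q \<le> q*Q"
    using Q q_pos by (intro mult_left_le) auto
  then have "q*Q*Q < 1" using Q by linarith
  then have identity:
    "lqa q m * (e * ((1-Q*K*q)*(1-Q*K*q*q)/(q*K*Q))) =
       (lqa q m + lqc q m) * (e * ((K-Q)*(1-Q*K*q)/(Q*K))) - (1+q) - lqc q m * (e * ((K-Q)*(q*K-Q)/(Q*K)))"
    using expansion_coeff_identity[of q Q K] Q K mult_pos_pos[OF q_pos Q(1)]
    unfolding lqa_eq[OF m] lqc_eq[OF m] Q_def[symmetric] e_def by simp
  have "lqa q m * expansion_coeff (Suc m) k = X * (lqa q m * (e * ((1-Q*K*q)*(1-Q*K*q*q)/(q*K*Q))))"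
    unfolding Suc expansion_coeff_Suc_Suc by (simp add: X_def e_def Q_def K_def)
  also have "\<dots> = (lqa q m + lqc q m) * (X * (e * ((K-Q)*(1-Q*K*q)/(Q*K)))) - (1+q) * X
                   - lqc q m * (X * (e * ((K-Q)*(q*K-Q)/(Q*K))))"
    unfolding identity by (simp add: algebra_simps)
  also have "\<dots> = (1 - lqb q m) * expansion_coeff m k - (1+q) * expansion_coeff m (k-1)
                   - lqc q m * expansion_coeff (m-1) k"
    using expansion_coeff_Suc_right[of m k'] expansion_coeff_Suc_left[of p k'] lqa_plus_lqc[OF m]
    by (simp add: Suc mp X_def e_def Q_def K_def)
  finally show ?thesis using Suc by simp
qed

lemma expansion_sum_extend:
  "n \<le> N \<Longrightarrow> (\<Sum>k\<le>N. expansion_coeff n k * t^k) = (\<Sum>k\<le>n. expansion_coeff n k * t^k)"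
  by (rule sum.mono_neutral_right) (auto simp: expansion_coeff_eq_0)

lemma expansion_coeff_1_1: "expansion_coeff (Suc 0) (Suc 0) = -(1+q)"
proof -
  have "hyp_weight 1 = -q / ((1-q)*(1-q))" "qpoch_inv 1 1 = (1-q) / q" "qpoch_shift 1 1 = (1-q)*(1+q)"
    by (simp_all add: hyp_weight_def qpoch_inv_def qpoch_shift_def power2_eq_square field_simps)
  then show ?thesis
    using q_less_1 by (simp add: expansion_coeff_def)
qed

lemma expansion_sum_shift:
  "(\<Sum>k\<le>Suc m. (if k = 0 then 0 else (1+q) * expansion_coeff m (k-1)) * t^k)
     = (1+q) * t * (\<Sum>k\<le>Suc m. expansion_coeff m k * t^k)"
proof -
  have "(\<Sum>k\<le>Suc m. (if k = 0 then 0 else (1+q) * expansion_coeff m (k-1)) * t^k)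
      = (1+q) * t * (\<Sum>k\<le>m. expansion_coeff m k * t^k)"
    by (subst sum.atMost_Suc_shift) (simp add: sum_distrib_left algebra_simps)
  then show ?thesis
    using expansion_sum_extend[of m "Suc m" t] by simp
qed

lemma R_one_minus: "R n (1 - t) = (\<Sum>k\<le>n. expansion_coeff n k * t^k)"
proof (induction n rule: less_induct)
  case (less n)
  consider "n = 0" | "n = 1" | m where "n = Suc m" "1 \<le> m"
    by (cases n) (auto simp: Suc_le_eq)
  then show ?case
  proof cases
    case 1
    then show ?thesis by simp
  next
    case 2
    then show ?thesis
      using R_1[of "1-t"] by (simp del: lqR.simps add: expansion_coeff_1_1 algebra_simps)
  next
    case 3
    note m = \<open>1 \<le> m\<close>
    let ?S = "\<lambda>n. \<Sum>k\<le>Suc m. expansion_coeff n k * t^k"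
    have IH: "R m (1-t) = ?S m" "R (m-1) (1-t) = ?S (m-1)"
      using less.IH[of m] less.IH[of "m-1"] 3 expansion_sum_extend[of _ "Suc m" t] by simp_all
    have "lqa q m * ?S (Suc m) = (\<Sum>k\<le>Suc m. lqa q m * expansion_coeff (Suc m) k * t^k)"
      unfolding sum_distrib_left by (simp only: mult.assoc)
    also have "\<dots> = (\<Sum>k\<le>Suc m. (1 - lqb q m) * (expansion_coeff m k * t^k)
             - (if k = 0 then 0 else (1+q) * expansion_coeff m (k-1)) * t^k
             - lqc q m * (expansion_coeff (m-1) k * t^k))"
      by (rule sum.cong) (simp_all add: expansion_coeff_recurrence[OF m] algebra_simps)
    also have "\<dots> = (1 - lqb q m) * ?S m - (1+q) * t * ?S m - lqc q m * ?S (m-1)"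
      by (simp del: sum.atMost_Suc add: sum_subtractf sum_distrib_left expansion_sum_shift)
    also have "\<dots> = (R 1 (1-t) - lqb q m) * R m (1-t) - lqc q m * R (m-1) (1-t)"
      unfolding IH R_1 by (simp del: sum.atMost_Suc lqR.simps add: algebra_simps)
    also have "\<dots> = lqa q m * R (Suc m) (1-t)"
      using R_Suc[OF m] by simp
    finally show ?thesis
      using lqa_nonzero[of m] 3 by simp
  qed
qed

definition qtri :: "nat \<Rightarrow> real" where
  "qtri n = (\<Prod>i<n. q^(i+1))"

lemma qtri_0 [simp]: "qtri 0 = 1"
  by (simp add: qtri_def)

lemma qtri_Suc: "qtri (Suc n) = qtri n * q^(n+1)"
  by (simp add: qtri_def)

lemma qtri_pos: "0 < qtri n"
  unfolding qtri_def by (intro prod_pos) (simp add: q_pos)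

lemma recurrence_coeff_relation:
  assumes m: "1 \<le> m"
  shows "(q + lqb q m) * q^m - lqc q m = lqa q m * (q^m * (q * q^m))"
proof -
  have "q*q^m < 1" "q*q^m*q^m \<le> q*q^m"
    using q_power_less_1[of "Suc m"] q_power_le_1[of m] q_pos by (simp_all add: mult_left_le)
  moreover define D1 D2 D3 where "D1 = 1 - q*q^m*q^m" and "D2 = 1 + q*q^m" and "D3 = 1 + q^m"
  ultimately have nonzero: "D1 \<noteq> 0" "D2 \<noteq> 0" "D3 \<noteq> 0"
    using q_power_pos[of "Suc m"] q_power_pos[of m] by (auto simp del: q_power_pos)
  have "lqa q m * (q^m * D2) + lqc q m * D3 = q^m * (1+q) * (q^m * (1 - q*q^m) + (1 - q^m)) / D1"
    using nonzero unfolding lqa_eq[OF m] lqc_eq[OF m] D1_def[symmetric] D2_def[symmetric] D3_def[symmetric]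
    by (simp add: field_simps)
  also have "q^m * (1 - q*q^m) + (1 - q^m) = D1"
    by (simp add: D1_def algebra_simps)
  finally have "lqa q m * (q^m * (1 + q*q^m)) + lqc q m * (1 + q^m) = q^m * (1+q)"
    using nonzero by (simp add: D2_def D3_def)
  moreover have lqb: "lqb q m = 1 - lqa q m - lqc q m"
    using lqa_plus_lqc[OF m] by simp
  ultimately show ?thesis
    unfolding lqb by (simp add: algebra_simps)
qed

lemma R_at_0: "R n 0 = (-1)^n * qtri n"
proof (induction n rule: less_induct)
  case (less n)
  consider "n = 0" | "n = 1" | p where "n = Suc (Suc p)"
    by (metis One_nat_def not0_implies_Suc)
  then show ?case
  proof cases
    case 1
    then show ?thesis by simp
  next
    case 2
    then show ?thesis using R_1[of 0] by (simp del: lqR.simps add: qtri_def)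
  next
    case 3
    define m where "m = Suc p"
    have m: "1 \<le> m" by (simp add: m_def)
    have "lqa q m * R (Suc m) 0 = (R 1 0 - lqb q m) * R m 0 - lqc q m * R (m-1) 0"
      using R_Suc[OF m] by simp
    also have "\<dots> = (-1)^p * qtri p * ((q + lqb q m) * q^m - lqc q m)"
    proof -
      have "R m 0 = - ((-1)^p * qtri p * q^m)" "R (m-1) 0 = (-1)^p * qtri p"
        using less.IH[of m] less.IH[of p] 3 by (simp_all add: m_def qtri_Suc)
      then show ?thesis using R_1[of 0] by (simp del: lqR.simps add: algebra_simps)
    qed
    also have "\<dots> = lqa q m * ((-1)^(Suc m) * qtri (Suc m))"
      unfolding recurrence_coeff_relation[OF m] by (simp add: m_def qtri_Suc algebra_simps)
    finally show ?thesis
      using lqa_nonzero[of m] 3 by (simp add: m_def)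
  qed
qed

section \<open>The \<open>q\<close>-difference equation and the dual expansion at the nodes\<close>

text \<open>In the variable \<open>t = 1 - x\<close>, each \<open>R n\<close> is an eigenfunction of a second-order
  \<open>q\<close>-difference operator; this is the dual of the three-term recurrence in \<open>n\<close>.\<close>

definition solves_qdiff :: "real \<Rightarrow> (real \<Rightarrow> real) \<Rightarrow> bool" where
  "solves_qdiff L F \<longleftrightarrow>
     (\<forall>t. (1 - q*t) * F (q*t) - (2 - t - q*t) * F t + (1 - t) * F (t/q) + L * t * F t = 0)"

lemma expansion_term_telescopes:
  fixes n k :: nat and t :: real
  defines "w \<equiv> \<lambda>k. expansion_coeff n k * (q^k - 2 + 1/q^k) * t^k"
  shows "expansion_coeff n k * ((1 - q*t) * (q*t)^k - (2 - t - q*t) * t^k + (1 - t) * (t/q)^k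
           + eigenvalue n * (t * t^k)) = w k - w (Suc k)"
proof -
  define nu where "nu k = q^k - 2 + 1/q^k" for k
  have "q^(k+1) \<noteq> 0" "1 - q^(k+1) \<noteq> 0"
    using q_power_less_1[of "k+1"] by auto
  moreover have "nu (Suc k) = (1 - q^(k+1))^2 / q^(k+1)"
    using \<open>q^(k+1) \<noteq> 0\<close> unfolding nu_def Suc_eq_plus1 by (simp add: field_simps power2_eq_square)
  ultimately have nu_Suc: "(- (q^(k+1)) / (1 - q^(k+1))^2) * nu (Suc k) = -1"
    by simp
  have regroup: "(1 - q*t) * (K*T) - (2 - t - q*t) * T + (1 - t) * (T/K) + L * (t*T)
      = (K - 2 + 1/K) * T + (L - (1-K)*(1-q*K)/K) * (t*T)" if "K \<noteq> 0" for K T L :: real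
    using that by (simp add: field_simps)
  define E where "E = - (q^(k+1)) / (1 - q^(k+1))^2"
  have "w (Suc k) = expansion_coeff n k * (eigenvalue n - eigenvalue k) * (t * t^k) * (E * nu (Suc k))"
    unfolding w_def nu_def expansion_coeff_Suc E_def[symmetric] by (simp add: algebra_simps)
  then have w_Suc: "w (Suc k) = - (expansion_coeff n k * (eigenvalue n - eigenvalue k) * (t * t^k))"
    unfolding E_def nu_Suc by simp
  have bracket: "(1 - q*t) * (q*t)^k - (2 - t - q*t) * t^k + (1 - t) * (t/q)^k + eigenvalue n * (t * t^k)
      = nu k * t^k + (eigenvalue n - eigenvalue k) * (t * t^k)"
    using regroup[of "q^k" "t^k" "eigenvalue n"]
    by (simp add: nu_def eigenvalue_def power_mult_distrib power_divide)
  show ?thesis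
    unfolding bracket w_Suc by (simp add: w_def nu_def algebra_simps)
qed

lemma R_one_minus_solves_qdiff: "solves_qdiff (eigenvalue n) (\<lambda>t. R n (1 - t))"
  unfolding solves_qdiff_def
proof
  fix t
  define w where "w k = expansion_coeff n k * (q^k - 2 + 1/q^k) * t^k" for k
  have "(1 - q*t) * R n (1 - q*t) - (2 - t - q*t) * R n (1 - t) + (1 - t) * R n (1 - t/q)
        + eigenvalue n * t * R n (1 - t)
      = (\<Sum>k\<le>n. expansion_coeff n k * ((1 - q*t) * (q*t)^k - (2 - t - q*t) * t^k
          + (1 - t) * (t/q)^k + eigenvalue n * (t * t^k)))"
    unfolding R_one_minus by (simp add: sum_distrib_left sum.distrib sum_subtractf algebra_simps)
  also have "\<dots> = w 0 - w (Suc n)"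
    unfolding expansion_term_telescopes w_def[abs_def] by (rule sum_telescope)
  also have "\<dots> = 0"
    by (simp add: w_def expansion_coeff_eq_0)
  finally show "(1 - q*t) * R n (1 - q*t) - (2 - t - q*t) * R n (1 - t) + (1 - t) * R n (1 - t/q)
        + eigenvalue n * t * R n (1 - t) = 0" .
qed

definition node_prod :: "nat \<Rightarrow> real \<Rightarrow> real" where
  "node_prod k J = (\<Prod>i<k. J - q^i)"

definition qpoch_sq :: "nat \<Rightarrow> real" where
  "qpoch_sq k = (\<Prod>i<k. (1 - q^(i+1))^2)"

definition eigen_prod :: "nat \<Rightarrow> real \<Rightarrow> real" where
  "eigen_prod k L = (\<Prod>i<k. L - eigenvalue i)"

text \<open>The same polynomials expanded in the dual direction: a series in the eigenvalues,
  with coefficients that vanish at the nodes \<open>q\<^sup>j\<close> beyond \<open>k = j\<close>.\<close>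

definition dual_sum :: "nat \<Rightarrow> real \<Rightarrow> real" where
  "dual_sum n J = (\<Sum>k\<le>n. node_prod k J / qpoch_sq k * eigen_prod k (eigenvalue n))"

lemma node_prod_0 [simp]: "node_prod 0 J = 1"
  by (simp add: node_prod_def)

lemma qpoch_sq_0 [simp]: "qpoch_sq 0 = 1"
  by (simp add: qpoch_sq_def)

lemma eigen_prod_0 [simp]: "eigen_prod 0 L = 1"
  by (simp add: eigen_prod_def)

lemma node_prod_Suc: "node_prod (Suc k) J = node_prod k J * (J - q^k)"
  by (simp add: node_prod_def)

lemma qpoch_sq_Suc: "qpoch_sq (Suc k) = qpoch_sq k * (1 - q^(k+1))^2"
  by (simp add: qpoch_sq_def)

lemma eigen_prod_Suc: "eigen_prod (Suc k) L = eigen_prod k L * (L - eigenvalue k)"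
  by (simp add: eigen_prod_def)

lemma qpoch_sq_pos: "0 < qpoch_sq k"
  unfolding qpoch_sq_def
proof (rule prod_pos)
  fix i
  have "q^(i+1) < 1" by (rule q_power_less_1) simp
  then show "0 < (1 - q^(i+1))^2" by simp
qed

lemma eigen_prod_eq_0: "n < k \<Longrightarrow> eigen_prod k (eigenvalue n) = 0"
  unfolding eigen_prod_def by (rule prod_zero) auto

lemma node_prod_eq_0: "j < k \<Longrightarrow> node_prod k (q^j) = 0"
  unfolding node_prod_def by (rule prod_zero) (auto intro: bexI[of _ j])

lemma node_prod_Suc_scaled: "node_prod (Suc k) (q*J) = q^(k+1) * (J - 1/q) * node_prod k J"
proof (induction k)
  case (Suc k)
  have "node_prod (Suc (Suc k)) (q*J) = q^(k+1) * (J - 1/q) * node_prod k J * (q*J - q^(Suc k))"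
    using Suc by (simp add: node_prod_Suc)
  also have "\<dots> = q^(Suc k+1) * (J - 1/q) * (node_prod k J * (J - q^k))"
    by (simp add: algebra_simps)
  finally show ?case by (simp add: node_prod_Suc)
qed (simp add: node_prod_def field_simps)

lemma node_prod_divided: "node_prod k (J/q) * (J - 1) = (J - q^k) * node_prod k J / q^k"
proof (induction k)
  case (Suc k)
  have "node_prod (Suc k) (J/q) * (J - 1) = (node_prod k (J/q) * (J - 1)) * (J/q - q^k)"
    by (simp add: node_prod_Suc)
  also have "\<dots> = (J - q^(Suc k)) * (node_prod k J * (J - q^k)) / q^(Suc k)"
    unfolding Suc by (simp add: field_simps)
  finally show ?case by (simp add: node_prod_Suc)
qed simp

lemma node_prod_qdiff:
  "(1-q*J) * node_prod k (q*J) - (2-J-q*J) * node_prod k J + (1-J) * node_prod k (J/q)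
     + J * eigenvalue k * node_prod k J + J * (if k = 0 then 0 else (1 - q^k)^2 * node_prod (k-1) J) = 0"
  (is "?lhs = 0")
proof (cases k)
  case (Suc k')
  define K where "K = q^k'"
  define G where "G = node_prod k' J"
  have a: "node_prod k (q*J) = q*K*(J - 1/q) * G"
    using node_prod_Suc_scaled[of k' J] by (simp add: Suc K_def G_def)
  have b: "node_prod k J = (J - K) * G"
    by (simp add: Suc node_prod_Suc K_def G_def)
  have c: "(1-J) * node_prod k (J/q) = - ((J - q*K) * ((J-K)*G) / (q*K))"
    using node_prod_divided[of k J] unfolding b by (simp add: Suc K_def algebra_simps)
  have d: "eigenvalue k = (1-q*K)*(1-q*(q*K))/(q*K)"
    by (simp add: eigenvalue_def Suc K_def)
  have e: "(if k = 0 then 0 else (1 - q^k)^2 * node_prod (k-1) J) = (1-q*K)^2 * G"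
    by (simp add: Suc K_def G_def)
  have "K \<noteq> 0" by (simp add: K_def)
  have "(1-q*J)*(q*K)*K*(q*J-1) - (2-J-q*J)*(J-K)*(q*K) - (J-q*K)*(J-K)
      + J*(1-q*K)*(1-q*q*K)*(J-K) + J*(q*K)*(1-q*K)^2 = 0"
    by algebra
  moreover have "(1-q*J)*(q*K*(J - 1/q)) - (2-J-q*J)*(J-K) - (J-q*K)*(J-K)/(q*K)
      + J*((1-q*K)*(1-q*(q*K))/(q*K))*(J-K) + J*(1-q*K)^2
    = ((1-q*J)*(q*K)*K*(q*J-1) - (2-J-q*J)*(J-K)*(q*K) - (J-q*K)*(J-K)
      + J*(1-q*K)*(1-q*q*K)*(J-K) + J*(q*K)*(1-q*K)^2) / (q*K)"
    using \<open>K \<noteq> 0\<close> by (simp add: field_simps)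
  moreover have "?lhs = G * ((1-q*J)*(q*K*(J - 1/q)) - (2-J-q*J)*(J-K) - (J-q*K)*(J-K)/(q*K)
      + J*((1-q*K)*(1-q*(q*K))/(q*K))*(J-K) + J*(1-q*K)^2)"
    unfolding a b c d e by (simp add: algebra_simps)
  ultimately show ?thesis by simp
qed simp

lemma dual_sum_index_shift:
  "(\<Sum>k\<le>n. node_prod k J * (1 / qpoch_sq k) * eigen_prod (Suc k) (eigenvalue n))
     = (\<Sum>k\<le>n. (if k = 0 then 0 else (1 - q^k)^2 * node_prod (k-1) J) * (1 / qpoch_sq k)
                 * eigen_prod k (eigenvalue n))"
proof -
  define prev where "prev k = (if k = 0 then 0 else (1 - q^k)^2 * node_prod (k-1) J)" for k
  have prev: "prev k * (1 / qpoch_sq k) = (if k = 0 then 0 else node_prod (k-1) J * (1 / qpoch_sq (k-1)))" for k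
  proof (cases k)
    case (Suc k')
    have "qpoch_sq k' \<noteq> 0" "1 - q^k \<noteq> 0"
      using qpoch_sq_pos[of k'] q_power_less_1[of k] Suc by auto
    then show ?thesis by (simp add: Suc prev_def qpoch_sq_Suc field_simps)
  qed (simp add: prev_def)
  have "(\<Sum>k\<le>Suc n. prev k * (1 / qpoch_sq k) * eigen_prod k (eigenvalue n))
      = (\<Sum>k\<le>n. node_prod k J * (1 / qpoch_sq k) * eigen_prod (Suc k) (eigenvalue n))"
    unfolding prev by (subst sum.atMost_Suc_shift) simp
  moreover have "(\<Sum>k\<le>Suc n. prev k * (1 / qpoch_sq k) * eigen_prod k (eigenvalue n))
      = (\<Sum>k\<le>n. prev k * (1 / qpoch_sq k) * eigen_prod k (eigenvalue n))"
    by (simp add: eigen_prod_eq_0)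
  ultimately show ?thesis
    by (simp add: prev_def)
qed

lemma dual_sum_solves_qdiff: "solves_qdiff (eigenvalue n) (dual_sum n)"
  unfolding solves_qdiff_def
proof
  fix J
  define B where "B k = eigen_prod k (eigenvalue n)" for k
  define Di where "Di k = 1 / qpoch_sq k" for k
  define prev where "prev k = (if k = 0 then 0 else (1 - q^k)^2 * node_prod (k-1) J)" for k
  have dual: "dual_sum n X = (\<Sum>k\<le>n. node_prod k X * Di k * B k)" for X
    unfolding dual_sum_def B_def Di_def by simp
  have eig_B: "eigenvalue n * B k = B (Suc k) + eigenvalue k * B k" for k
    by (simp add: B_def eigen_prod_Suc algebra_simps)
  have "eigenvalue n * J * dual_sum n J = (\<Sum>k\<le>n. J * node_prod k J * Di k * (eigenvalue n * B k))"
    unfolding dual by (simp add: sum_distrib_left algebra_simps)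
  also have "\<dots> = (\<Sum>k\<le>n. B k * Di k * (J * eigenvalue k * node_prod k J))
                  + J * (\<Sum>k\<le>n. node_prod k J * Di k * B (Suc k))"
    unfolding eig_B by (simp add: sum_distrib_left sum.distrib algebra_simps)
  also have "(\<Sum>k\<le>n. node_prod k J * Di k * B (Suc k)) = (\<Sum>k\<le>n. prev k * Di k * B k)"
    unfolding B_def Di_def prev_def by (rule dual_sum_index_shift)
  finally have "(1 - q*J) * dual_sum n (q*J) - (2 - J - q*J) * dual_sum n J + (1 - J) * dual_sum n (J/q)
        + eigenvalue n * J * dual_sum n J
      = (\<Sum>k\<le>n. B k * Di k * ((1-q*J) * node_prod k (q*J) - (2-J-q*J) * node_prod k J
          + (1-J) * node_prod k (J/q) + J * eigenvalue k * node_prod k J + J * prev k))"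
    unfolding dual by (simp add: sum_distrib_left sum.distrib sum_subtractf algebra_simps)
  also have "\<dots> = 0"
    using node_prod_qdiff by (simp add: prev_def)
  finally show "(1 - q*J) * dual_sum n (q*J) - (2 - J - q*J) * dual_sum n J + (1 - J) * dual_sum n (J/q)
        + eigenvalue n * J * dual_sum n J = 0" .
qed

lemma dual_sum_at_1: "dual_sum n 1 = 1"
proof -
  have "node_prod (Suc k) 1 = 0" for k
    unfolding node_prod_def by (rule prod_zero) (simp, rule bexI[of _ 0], simp_all)
  then have "dual_sum n 1 = (\<Sum>k\<le>n. if k = 0 then 1 else 0)"
    unfolding dual_sum_def by (intro sum.cong) (auto simp: gr0_conv_Suc)
  then show ?thesis by simp
qed

lemma solves_qdiff_scale: "solves_qdiff L F \<Longrightarrow> solves_qdiff L (\<lambda>t. c * F t)"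
  unfolding solves_qdiff_def
proof
  fix t
  assume "\<forall>t. (1 - q*t) * F (q*t) - (2 - t - q*t) * F t + (1 - t) * F (t/q) + L * t * F t = 0"
  then have "c * ((1 - q*t) * F (q*t) - (2 - t - q*t) * F t + (1 - t) * F (t/q) + L * t * F t) = 0"
    by simp
  then show "(1 - q*t) * (c * F (q*t)) - (2 - t - q*t) * (c * F t) + (1 - t) * (c * F (t/q))
      + L * t * (c * F t) = 0"
    by (simp add: algebra_simps)
qed

lemma solves_qdiff_step:
  "solves_qdiff L F \<Longrightarrow> (1 - q*t) * F (q*t) = (2 - t - q*t) * F t - (1 - t) * F (t/q) - L * t * F t"
  unfolding solves_qdiff_def by (drule spec[of _ t]) linarith

text \<open>The equation determines a solution at the nodes \<open>q\<^sup>j\<close> from its value at \<open>1\<close>, because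
  the coefficient of \<open>F (t/q)\<close> vanishes at \<open>t = 1\<close>.\<close>

lemma solves_qdiff_unique_on_powers:
  assumes F: "solves_qdiff L F" and G: "solves_qdiff L G" and "F 1 = G 1"
  shows "F (q^j) = G (q^j)"
proof (induction j rule: less_induct)
  case (less j)
  consider "j = 0" | "j = 1" | i where "j = Suc (Suc i)"
    by (metis One_nat_def not0_implies_Suc)
  then show ?case
  proof cases
    case 1
    then show ?thesis using \<open>F 1 = G 1\<close> by simp
  next
    case 2
    have "(1 - q) * F q = (1 - q) * G q"
      using solves_qdiff_step[OF F, of 1] solves_qdiff_step[OF G, of 1] \<open>F 1 = G 1\<close> by simp
    then show ?thesis using 2 q_less_1 by simp
  next
    case 3
    define t where "t = q^Suc i"
    have IH: "F t = G t" "F (t/q) = G (t/q)"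
      using less.IH[of "Suc i"] less.IH[of i] 3 by (simp_all add: t_def)
    have "(1 - q*t) * F (q*t) = (1 - q*t) * G (q*t)"
      using solves_qdiff_step[OF F, of t] solves_qdiff_step[OF G, of t] IH by simp
    moreover have "1 - q*t \<noteq> 0"
      using q_power_less_1[of "Suc (Suc i)"] by (simp add: t_def)
    ultimately show ?thesis using 3 by (simp add: t_def)
  qed
qed

lemma R_at_nodes: "R n (1 - q^j) = R n 0 * dual_sum n (q^j)"
  using solves_qdiff_unique_on_powers[OF R_one_minus_solves_qdiff
      solves_qdiff_scale[OF dual_sum_solves_qdiff, of n "R n 0"]]
  by (simp add: dual_sum_at_1)

lemma geometric_sum_le: "(\<Sum>i<m. q^i) \<le> 1 / (1 - q)"
proof -
  have "(\<Sum>i<m. q^i) = (1 - q^m) / (1 - q)"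
    using q_less_1 by (simp add: sum_gp_strict)
  also have "\<dots> \<le> 1 / (1 - q)"
    using q_less_1 by (intro divide_right_mono) auto
  finally show ?thesis .
qed

definition kappa :: real where
  "kappa = exp (- 2 / (1 - q)^2)"

lemma kappa_pos: "0 < kappa"
  by (simp add: kappa_def)

lemma kappa_le_qpoch_sq: "kappa \<le> qpoch_sq k"
proof -
  have exp_le: "exp (- 2 * (\<Sum>i<k. q^(i+1)) / (1 - q)) \<le> qpoch_sq k" for k
  proof (induction k)
    case (Suc k)
    have "exp (- (q^(k+1)) / (1 - q)) \<le> 1 - q^(k+1)"
      using q_pos q_less_1 by (intro exp_neg_div_le_one_minus) (auto simp: power_le_one mult_left_le)
    then have "exp (- (q^(k+1)) / (1 - q)) * exp (- (q^(k+1)) / (1 - q)) \<le> (1 - q^(k+1))^2"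
      using q_power_le_1[of "k+1"] unfolding power2_eq_square by (intro mult_mono) auto
    then have "exp (- 2 * q^(k+1) / (1 - q)) \<le> (1 - q^(k+1))^2"
      by (simp add: exp_add[symmetric])
    moreover have "exp (- 2 * (\<Sum>i<Suc k. q^(i+1)) / (1 - q))
        = exp (- 2 * (\<Sum>i<k. q^(i+1)) / (1 - q)) * exp (- 2 * q^(k+1) / (1 - q))"
      by (simp add: exp_add[symmetric] add_divide_distrib[symmetric] algebra_simps)
    ultimately show ?case
      using Suc qpoch_sq_pos[of k] by (simp add: qpoch_sq_Suc mult_mono)
  qed simp
  have "(\<Sum>i<k. q^(i+1)) = q * (\<Sum>i<k. q^i)"
    by (simp add: sum_distrib_left)
  also have "\<dots> \<le> 1 * (1 / (1 - q))"
    using geometric_sum_le[of k] q_pos q_less_1 by (intro mult_mono) (auto intro: sum_nonneg)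
  finally have "2 * (\<Sum>i<k. q^(i+1)) / (1 - q) \<le> 2 * (1 / (1 - q)) / (1 - q)"
    using q_less_1 by (intro divide_right_mono mult_left_mono) auto
  then have "kappa \<le> exp (- 2 * (\<Sum>i<k. q^(i+1)) / (1 - q))"
    unfolding kappa_def by (simp add: power2_eq_square)
  then show ?thesis using exp_le[of k] by linarith
qed

lemma node_prod_bound: "k \<le> j \<Longrightarrow> \<bar>node_prod k (q^j)\<bar> \<le> (\<Prod>i<k. q^i)"
  unfolding node_prod_def abs_prod
  by (intro prod_mono) (auto simp: q_power_antimono)

lemma eigen_prod_bound: assumes "k \<le> n" shows "\<bar>eigen_prod k (eigenvalue n)\<bar> \<le> (1/q^n)^k"
proof -
  have "\<bar>eigen_prod k (eigenvalue n)\<bar> = (\<Prod>i<k. \<bar>eigenvalue n - eigenvalue i\<bar>)"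
    unfolding eigen_prod_def by (simp add: abs_prod)
  also have "\<dots> \<le> (\<Prod>i<k. 1/q^n)"
  proof (rule prod_mono)
    fix i assume "i \<in> {..<k}"
    then have "q^n \<le> q^i" using assms by (intro q_power_antimono) auto
    then have a: "0 \<le> 1/q^n - 1/q^i" "1/q^n - 1/q^i \<le> 1/q^n"
      by (auto simp: field_simps)
    have b: "0 \<le> 1 - q^(n+i+1)" "1 - q^(n+i+1) \<le> 1"
      using q_power_le_1[of "n+i+1"] q_power_nonneg[of "n+i+1"] by linarith+
    have "(1/q^n - 1/q^i) * (1 - q^(n+i+1)) \<le> (1/q^n) * 1"
      using a b by (intro mult_mono) auto
    with a b show "0 \<le> \<bar>eigenvalue n - eigenvalue i\<bar> \<and> \<bar>eigenvalue n - eigenvalue i\<bar> \<le> 1/q^n"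
      unfolding eigenvalue_diff by simp
  qed
  finally show ?thesis by simp
qed

lemma qtri_shift: "k \<le> n \<Longrightarrow> qtri n * (\<Prod>i<k. q^i) * (1/q^n)^k = qtri (n - k)"
proof (induction k)
  case (Suc k)
  then have IH: "qtri n * (\<Prod>i<k. q^i) * (1/q^n)^k = qtri (n - k)" by simp
  obtain d where d: "n - k = Suc d"
    using Suc.prems by (metis Suc_diff_le Suc_le_lessD diff_Suc_Suc less_imp_le)
  have "qtri n * (\<Prod>i<Suc k. q^i) * (1/q^n)^(Suc k) = (qtri n * (\<Prod>i<k. q^i) * (1/q^n)^k) * (q^k / q^n)"
    by (simp add: field_simps)
  also have "\<dots> = qtri d * (q^(d+1) * q^k / q^n)"
    unfolding IH d by (simp add: qtri_Suc)
  also have "q^(d+1) * q^k = q^n"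
  proof -
    have "n = (d+1) + k" using d Suc.prems by arith
    then show ?thesis by (simp only: power_add)
  qed
  finally have "qtri n * (\<Prod>i<Suc k. q^i) * (1/q^n)^(Suc k) = qtri d" by simp
  moreover have "n - Suc k = d" using d by simp
  ultimately show ?case by simp
qed simp

lemma qtri_le: "q * qtri d \<le> q^(2*d)"
proof (induction d)
  case (Suc d)
  show ?case
  proof (cases d)
    case 0
    then show ?thesis by (simp add: qtri_Suc power2_eq_square)
  next
    case (Suc d')
    have "q * qtri (Suc d) = (q * qtri d) * q^(d+1)"
      by (simp add: qtri_Suc)
    also have "\<dots> \<le> q^(2*d) * q^(d+1)"
      using Suc.IH q_pos by (intro mult_right_mono) auto
    also have "\<dots> = q^(2*d + (d+1))"
      by (rule power_add[symmetric])
    also have "\<dots> \<le> q^(2 * Suc d)"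
      using Suc by (intro q_power_antimono) auto
    finally show ?thesis .
  qed
qed (use q_less_1 in simp)

lemma dual_term_bound:
  assumes "k \<le> min n j"
  shows "qtri n * (\<bar>node_prod k (q^j)\<bar> / qpoch_sq k * \<bar>eigen_prod k (eigenvalue n)\<bar>)
           \<le> q^(2*(n-j)) * q^(min n j - k) / (q * kappa)"
proof -
  have kj: "k \<le> j" and kn: "k \<le> n" using assms by auto
  have "qtri n * (\<bar>node_prod k (q^j)\<bar> / qpoch_sq k * \<bar>eigen_prod k (eigenvalue n)\<bar>)
      \<le> qtri n * ((\<Prod>i<k. q^i) / kappa * (1/q^n)^k)"
    using kappa_pos qtri_pos[of n] prod_nonneg[of "{..<k}" "\<lambda>i. q^i"]
    by (intro mult_left_mono mult_mono divide_mono node_prod_bound[OF kj] eigen_prod_bound[OF kn]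
        kappa_le_qpoch_sq) auto
  also have "\<dots> = qtri (n-k) / kappa"
    using qtri_shift[OF kn] by (simp add: field_simps)
  also have "\<dots> \<le> q^(2*(n-k)) / (q * kappa)"
    using qtri_le[of "n-k"] kappa_pos q_pos by (simp add: field_simps)
  also have "\<dots> \<le> q^(2*(n-j)) * q^(min n j - k) / (q * kappa)"
  proof -
    have "2*(n-j) + (min n j - k) \<le> 2*(n-k)" using assms by auto
    then have "q^(2*(n-k)) \<le> q^(2*(n-j) + (min n j - k))" by (rule q_power_antimono)
    then show ?thesis using kappa_pos q_pos by (simp add: power_add divide_right_mono)
  qed
  finally show ?thesis .
qed

definition node_const :: real where
  "node_const = 1 / (kappa * q * (1 - q))"

lemma node_const_pos: "0 < node_const"
  using kappa_pos q_pos q_less_1 by (simp add: node_const_def)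

text \<open>The decay in \<open>n\<close> beyond \<open>n = j\<close> is what makes the characters at the nodes summable
  against \<open>h\<close>, which grows like \<open>q\<^sup>-\<^sup>n\<close>.\<close>

lemma R_at_nodes_bound: "\<bar>R n (1 - q^j)\<bar> \<le> node_const * q^(2*(n-j))"
proof -
  define m where "m = min n j"
  have "\<bar>R n (1 - q^j)\<bar> \<le> qtri n * (\<Sum>k\<le>n. \<bar>node_prod k (q^j)\<bar> / qpoch_sq k * \<bar>eigen_prod k (eigenvalue n)\<bar>)"
  proof -
    have "\<bar>dual_sum n (q^j)\<bar> \<le> (\<Sum>k\<le>n. \<bar>node_prod k (q^j) / qpoch_sq k * eigen_prod k (eigenvalue n)\<bar>)"
      unfolding dual_sum_def by (rule sum_abs)
    also have "\<dots> = (\<Sum>k\<le>n. \<bar>node_prod k (q^j)\<bar> / qpoch_sq k * \<bar>eigen_prod k (eigenvalue n)\<bar>)"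
      using qpoch_sq_pos by (simp add: abs_mult abs_of_pos)
    finally have "\<bar>dual_sum n (q^j)\<bar> \<le> \<dots>" .
    then show ?thesis
      unfolding R_at_nodes R_at_0 using qtri_pos[of n] by (simp add: abs_mult power_abs)
  qed
  also have "\<dots> \<le> (\<Sum>k\<le>n. if k \<le> m then q^(2*(n-j)) * q^(m-k) / (q * kappa) else 0)"
    unfolding sum_distrib_left
  proof (rule sum_mono)
    fix k assume "k \<in> {..n}"
    then show "qtri n * (\<bar>node_prod k (q^j)\<bar> / qpoch_sq k * \<bar>eigen_prod k (eigenvalue n)\<bar>)
        \<le> (if k \<le> m then q^(2*(n-j)) * q^(m-k) / (q * kappa) else 0)"
      using dual_term_bound[of k n j] node_prod_eq_0[of j k] by (auto simp: m_def)
  qed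
  also have "\<dots> = q^(2*(n-j)) / (q * kappa) * (\<Sum>k\<le>m. q^(m-k))"
    by (subst sum.mono_neutral_cong_right[of "{..n}" "{..m}"])
       (auto simp: m_def sum_distrib_left)
  also have "\<dots> \<le> q^(2*(n-j)) / (q * kappa) * (1 / (1 - q))"
  proof -
    have "(\<Sum>k\<le>m. q^(m-k)) = (\<Sum>k<Suc m. q^k)"
      using sum.nat_diff_reindex[of "\<lambda>k. q^k" "Suc m"] by (simp add: lessThan_Suc_atMost)
    then show ?thesis
      using geometric_sum_le[of "Suc m"] kappa_pos q_pos by (intro mult_left_mono) auto
  qed
  also have "\<dots> = node_const * q^(2*(n-j))"
    by (simp add: node_const_def field_simps)
  finally show ?thesis .
qed

section \<open>Linearization coefficients\<close>

abbreviation P :: "nat \<Rightarrow> real poly" where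
  "P n \<equiv> lqR q n"

lemma lqR_recurrence:
  assumes "1 \<le> m"
  shows "P 1 * P m = smult (lqa q m) (P (Suc m)) + smult (lqb q m) (P m) + smult (lqc q m) (P (m-1))"
proof -
  obtain k where m: "m = Suc k"
    using assms by (cases m) auto
  have "P (Suc m) = smult (1 / lqa q m) (P 1 * P m - smult (lqb q m) (P m) - smult (lqc q m) (P (m-1)))"
    unfolding m by simp
  then have "smult (lqa q m) (P (Suc m)) = P 1 * P m - smult (lqb q m) (P m) - smult (lqc q m) (P (m-1))"
    using lqa_nonzero[of m] by simp
  then show ?thesis
    by (simp add: algebra_simps)
qed

lemma degree_lqR_and_lead: "degree (P n) = n \<and> coeff (P n) n \<noteq> 0"
proof (induction n rule: less_induct)
  case (less n)
  consider "n = 0" | "n = 1" | m where "n = Suc (Suc m)"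
    by (metis One_nat_def not0_implies_Suc)
  then show ?case
  proof cases
    case 1
    then show ?thesis by simp
  next
    case 2
    then show ?thesis using lqa_nonzero[of 0] by (simp add: lqa_def)
  next
    case 3
    have IH1: "degree (P (Suc m)) = Suc m" "coeff (P (Suc m)) (Suc m) \<noteq> 0"
      and IH0: "degree (P m) = m" and d1: "degree (P 1) = 1" "coeff (P 1) 1 \<noteq> 0"
      using less.IH[of "Suc m"] less.IH[of m] less.IH[of 1] 3 by auto
    define X where "X = P 1 * P (Suc m) - smult (lqb q (Suc m)) (P (Suc m)) - smult (lqc q (Suc m)) (P m)"
    have "P 1 \<noteq> 0" "P (Suc m) \<noteq> 0"
      using d1 IH1 by auto
    then have "degree (P 1 * P (Suc m)) = Suc (Suc m)"
      using degree_mult_eq[of "P 1" "P (Suc m)"] d1 IH1 by simp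
    then have "degree X \<le> Suc (Suc m)"
      unfolding X_def using IH1 IH0
      by (intro degree_diff_le) (auto intro: order.trans[OF degree_smult_le])
    moreover have "coeff X (Suc (Suc m)) = coeff (P 1) 1 * coeff (P (Suc m)) (Suc m)"
      using coeff_mult_degree_sum[of "P 1" "P (Suc m)"] d1 IH1 IH0
      by (simp del: lqR.simps add: X_def coeff_eq_0)
    then have "coeff X (Suc (Suc m)) \<noteq> 0"
      using d1 IH1 by simp
    ultimately have "degree X = Suc (Suc m)"
      using le_degree[of X "Suc (Suc m)"] by simp
    moreover have "P n = smult (1 / lqa q (Suc m)) X"
      unfolding 3 X_def by simp
    ultimately show ?thesis
      using \<open>coeff X (Suc (Suc m)) \<noteq> 0\<close> lqa_nonzero[of "Suc m"] 3 by simp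
  qed
qed

lemma degree_lqR: "degree (P n) = n"
  using degree_lqR_and_lead by blast

lemma lqR_lead_nonzero: "coeff (P n) n \<noteq> 0"
  using degree_lqR_and_lead by blast

lemma coeff_lqR_eq_0: "n < i \<Longrightarrow> coeff (P n) i = 0"
  using degree_lqR[of n] by (simp add: coeff_eq_0)

lemma lqR_independent: "(\<Sum>k\<le>N. smult (c k) (P k)) = 0 \<Longrightarrow> k \<le> N \<Longrightarrow> c k = 0"
proof (induction N arbitrary: k)
  case 0
  then show ?case using lqR_lead_nonzero[of 0] by simp
next
  case (Suc N)
  have "(\<Sum>k\<le>N. c k * coeff (P k) (Suc N)) = 0"
    by (rule sum.neutral) (auto simp: coeff_lqR_eq_0)
  then have "coeff (\<Sum>k\<le>Suc N. smult (c k) (P k)) (Suc N) = c (Suc N) * coeff (P (Suc N)) (Suc N)"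
    by (simp add: coeff_sum)
  then have "c (Suc N) = 0"
    using Suc.prems(1) lqR_lead_nonzero[of "Suc N"] by (simp del: sum.atMost_Suc)
  moreover from this have "(\<Sum>k\<le>N. smult (c k) (P k)) = 0"
    using Suc.prems(1) by simp
  ultimately show ?case
    using Suc.IH[of k] Suc.prems(2) by (cases "k = Suc N") auto
qed

lemma lqR_expansion_exists: "degree p \<le> N \<Longrightarrow> \<exists>c. p = (\<Sum>k\<le>N. smult (c k) (P k))"
proof (induction N arbitrary: p)
  case 0
  then have "p = smult (coeff p 0) (P 0)"
    using degree_0_id[of p] by simp
  then show ?case by (intro exI[of _ "\<lambda>_. coeff p 0"]) simp
next
  case (Suc N)
  define d where "d = coeff p (Suc N) / coeff (P (Suc N)) (Suc N)"
  have "degree (p - smult d (P (Suc N))) \<le> N"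
  proof (rule degree_le, intro allI impI)
    fix i
    assume "N < i"
    then consider "i = Suc N" | "Suc N < i" by linarith
    then show "coeff (p - smult d (P (Suc N))) i = 0"
      using lqR_lead_nonzero[of "Suc N"] Suc.prems
      by cases (simp_all add: d_def coeff_eq_0 coeff_lqR_eq_0)
  qed
  then obtain c where c: "p - smult d (P (Suc N)) = (\<Sum>k\<le>N. smult (c k) (P k))"
    using Suc.IH by blast
  have "(\<Sum>k\<le>N. smult ((c(Suc N := d)) k) (P k)) = (\<Sum>k\<le>N. smult (c k) (P k))"
    by (rule sum.cong) auto
  then have "p = (\<Sum>k\<le>Suc N. smult ((c(Suc N := d)) k) (P k))"
    using c by (simp add: algebra_simps)
  then show ?case by blast
qed

definition is_linearization :: "nat \<Rightarrow> nat \<Rightarrow> (nat \<Rightarrow> real) \<Rightarrow> bool" where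
  "is_linearization m n c \<longleftrightarrow>
     (\<forall>k > m + n. c k = 0) \<and> P m * P n = (\<Sum>k\<le>m + n. smult (c k) (P k))"

lemma is_linearization_unique:
  assumes "is_linearization m n c" "is_linearization m n d"
  shows "c = d"
proof
  fix k
  show "c k = d k"
  proof (cases "k \<le> m + n")
    case True
    have "(\<Sum>k\<le>m+n. smult (c k - d k) (P k))
        = (\<Sum>k\<le>m+n. smult (c k) (P k)) - (\<Sum>k\<le>m+n. smult (d k) (P k))"
      by (simp add: smult_diff_left sum_subtractf)
    also have "\<dots> = 0"
      using assms by (simp add: is_linearization_def)
    finally show ?thesis
      using lqR_independent[of "\<lambda>k. c k - d k" "m+n" k] True by simp
  next
    case False
    then show ?thesis using assms by (simp add: is_linearization_def)
  qed
qed

lemma is_linearization_exists: "\<exists>c. is_linearization m n c"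
proof -
  have "degree (P m * P n) \<le> m + n"
    using degree_mult_le[of "P m" "P n"] by (simp add: degree_lqR)
  then obtain c where c: "P m * P n = (\<Sum>k\<le>m+n. smult (c k) (P k))"
    using lqR_expansion_exists by blast
  have "P m * P n = (\<Sum>k\<le>m + n. smult (if k \<le> m + n then c k else 0) (P k))"
    unfolding c by (rule sum.cong) auto
  then have "is_linearization m n (\<lambda>k. if k \<le> m + n then c k else 0)"
    by (simp add: is_linearization_def)
  then show ?thesis by blast
qed

lemma is_linearization_lqg: "is_linearization m n (lqg q m n)"
proof -
  have "lqg q m n = (THE c. is_linearization m n c)"
    unfolding lqg_def is_linearization_def by simp
  moreover have "\<exists>!c. is_linearization m n c"
    using is_linearization_exists is_linearization_unique by blast
  ultimately show ?thesis by (metis theI')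
qed

lemma lqg_eqI: "is_linearization m n c \<Longrightarrow> lqg q m n = c"
  using is_linearization_unique is_linearization_lqg by blast

lemma lqR_mult_lqg: "P m * P n = (\<Sum>k\<le>m + n. smult (lqg q m n k) (P k))"
  using is_linearization_lqg by (simp add: is_linearization_def)

lemma lqg_commute: "lqg q m n = lqg q n m"
  using is_linearization_lqg[of n m]
  by (intro lqg_eqI) (simp add: is_linearization_def add.commute mult.commute)

lemma lqg_0_0_0: "lqg q 0 0 0 = 1"
proof -
  have "is_linearization 0 0 (\<lambda>k. if k = 0 then 1 else 0)"
    by (simp add: is_linearization_def)
  then show ?thesis using lqg_eqI by fastforce
qed

lemma R_mult: "R m x * R n x = (\<Sum>k\<le>m + n. lqg q m n k * R k x)"
proof -
  have "R m x * R n x = poly (P m * P n) x"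
    by simp
  also have "\<dots> = (\<Sum>k\<le>m + n. lqg q m n k * R k x)"
    unfolding lqR_mult_lqg by (simp add: poly_sum)
  finally show ?thesis .
qed

definition in_lqR_span :: "nat \<Rightarrow> nat \<Rightarrow> real poly \<Rightarrow> bool" where
  "in_lqR_span a b p \<longleftrightarrow>
     (\<exists>c. (\<forall>k. (k < a \<or> b < k) \<longrightarrow> c k = 0) \<and> p = (\<Sum>k\<le>b. smult (c k) (P k)))"

lemma in_lqR_span_mono:
  assumes "in_lqR_span a b p" "a' \<le> a" "b \<le> b'"
  shows "in_lqR_span a' b' p"
proof -
  obtain c where c: "\<forall>k. (k < a \<or> b < k) \<longrightarrow> c k = 0" "p = (\<Sum>k\<le>b. smult (c k) (P k))"
    using assms(1) unfolding in_lqR_span_def by blast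
  have "p = (\<Sum>k\<le>b'. smult (c k) (P k))"
    unfolding c(2) by (rule sum.mono_neutral_right[symmetric]) (use c(1) assms(3) in auto)
  then show ?thesis
    unfolding in_lqR_span_def using c(1) assms(2,3) by (intro exI[of _ c]) auto
qed

lemma in_lqR_span_add:
  assumes "in_lqR_span a b p" "in_lqR_span a b p'"
  shows "in_lqR_span a b (p + p')"
proof -
  obtain c where c: "\<forall>k. (k < a \<or> b < k) \<longrightarrow> c k = 0" "p = (\<Sum>k\<le>b. smult (c k) (P k))"
    using assms(1) unfolding in_lqR_span_def by blast
  obtain d where d: "\<forall>k. (k < a \<or> b < k) \<longrightarrow> d k = 0" "p' = (\<Sum>k\<le>b. smult (d k) (P k))"
    using assms(2) unfolding in_lqR_span_def by blast
  have "p + p' = (\<Sum>k\<le>b. smult (c k + d k) (P k))"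
    unfolding c(2) d(2) by (simp add: smult_add_left sum.distrib)
  then show ?thesis
    unfolding in_lqR_span_def using c(1) d(1) by (intro exI[of _ "\<lambda>k. c k + d k"]) auto
qed

lemma in_lqR_span_smult:
  assumes "in_lqR_span a b p"
  shows "in_lqR_span a b (smult x p)"
proof -
  obtain c where c: "\<forall>k. (k < a \<or> b < k) \<longrightarrow> c k = 0" "p = (\<Sum>k\<le>b. smult (c k) (P k))"
    using assms(1) unfolding in_lqR_span_def by blast
  have "smult x p = (\<Sum>k\<le>b. smult (x * c k) (P k))"
    unfolding c(2) by (simp add: smult_sum_right)
  then show ?thesis
    unfolding in_lqR_span_def using c(1) by (intro exI[of _ "\<lambda>k. x * c k"]) auto
qed

lemma in_lqR_span_diff: "in_lqR_span a b p \<Longrightarrow> in_lqR_span a b p' \<Longrightarrow> in_lqR_span a b (p - p')"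
  using in_lqR_span_add[of a b p "smult (-1) p'"] in_lqR_span_smult[of a b p' "-1"] by simp

lemma in_lqR_span_zero: "in_lqR_span a b 0"
  unfolding in_lqR_span_def by (intro exI[of _ "\<lambda>_. 0"]) simp

lemma in_lqR_span_sum:
  "finite S \<Longrightarrow> (\<And>k. k \<in> S \<Longrightarrow> in_lqR_span a b (f k)) \<Longrightarrow> in_lqR_span a b (\<Sum>k\<in>S. f k)"
  by (induction S rule: finite_induct) (auto intro: in_lqR_span_add in_lqR_span_zero)

lemma in_lqR_span_lqR: "in_lqR_span k k (P k)"
proof -
  have "(\<Sum>i\<le>k. smult (if i = k then 1 else 0) (P i)) = (\<Sum>i\<le>k. if i = k then P i else 0)"
    by (rule sum.cong) auto
  then have "(\<Sum>i\<le>k. smult (if i = k then 1 else 0) (P i)) = P k"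
    by (simp add: sum.delta)
  then show ?thesis
    unfolding in_lqR_span_def by (intro exI[of _ "\<lambda>i. if i = k then 1 else 0"]) auto
qed

lemma in_lqR_span_lqR_1_mult_lqR: "in_lqR_span (k - 1) (k + 1) (P 1 * P k)"
proof (cases "k = 0")
  case True
  then show ?thesis using in_lqR_span_mono[OF in_lqR_span_lqR[of 1], of 0 1] by simp
next
  case False
  then have "1 \<le> k" by simp
  have "in_lqR_span (k-1) (k+1) (P (Suc k))" "in_lqR_span (k-1) (k+1) (P k)"
    "in_lqR_span (k-1) (k+1) (P (k-1))"
    using in_lqR_span_mono[OF in_lqR_span_lqR] by simp_all
  then show ?thesis
    unfolding lqR_recurrence[OF \<open>1 \<le> k\<close>] by (intro in_lqR_span_add in_lqR_span_smult)
qed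

lemma in_lqR_span_lqR_1_mult:
  assumes "in_lqR_span a b p"
  shows "in_lqR_span (a - 1) (b + 1) (P 1 * p)"
proof -
  obtain c where c: "\<forall>k. (k < a \<or> b < k) \<longrightarrow> c k = 0" "p = (\<Sum>k\<le>b. smult (c k) (P k))"
    using assms(1) unfolding in_lqR_span_def by blast
  have "P 1 * p = (\<Sum>k\<le>b. smult (c k) (P 1 * P k))"
    unfolding c(2) by (simp add: sum_distrib_left)
  also have "in_lqR_span (a - 1) (b + 1) \<dots>"
  proof (rule in_lqR_span_sum)
    fix k
    assume "k \<in> {..b}"
    show "in_lqR_span (a - 1) (b + 1) (smult (c k) (P 1 * P k))"
    proof (cases "k < a")
      case True
      then show ?thesis using c(1) in_lqR_span_zero by simp
    next
      case False
      then show ?thesis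
        using \<open>k \<in> {..b}\<close> by (intro in_lqR_span_smult in_lqR_span_mono[OF in_lqR_span_lqR_1_mult_lqR]) auto
    qed
  qed simp
  finally show ?thesis .
qed

lemma in_lqR_span_lqR_mult: "n \<le> m \<Longrightarrow> in_lqR_span (m - n) (m + n) (P m * P n)"
proof (induction n rule: less_induct)
  case (less n)
  consider "n = 0" | "n = 1" | k where "n = Suc (Suc k)"
    by (metis One_nat_def not0_implies_Suc)
  then show ?case
  proof cases
    case 1
    then show ?thesis using in_lqR_span_lqR[of m] by simp
  next
    case 2
    then show ?thesis using in_lqR_span_lqR_1_mult_lqR[of m] by (simp add: mult.commute)
  next
    case 3
    have IH1: "in_lqR_span (m - Suc k) (m + Suc k) (P m * P (Suc k))"
      and IH0: "in_lqR_span (m - k) (m + k) (P m * P k)"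
      using less.IH[of "Suc k"] less.IH[of k] less.prems 3 by simp_all
    have "P m * P n = smult (1 / lqa q (Suc k)) (P 1 * (P m * P (Suc k))
        - smult (lqb q (Suc k)) (P m * P (Suc k)) - smult (lqc q (Suc k)) (P m * P k))"
      unfolding 3 by (simp add: algebra_simps)
    moreover have "in_lqR_span (m - n) (m + n) (P 1 * (P m * P (Suc k)))"
      using in_lqR_span_lqR_1_mult[OF IH1] less.prems 3 by (simp add: numeral_2_eq_2)
    moreover have "in_lqR_span (m - n) (m + n) (P m * P (Suc k))"
      "in_lqR_span (m - n) (m + n) (P m * P k)"
      using in_lqR_span_mono[OF IH1] in_lqR_span_mono[OF IH0] 3 by simp_all
    ultimately show ?thesis
      by (auto intro: in_lqR_span_smult in_lqR_span_diff)
  qed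
qed

lemma lqg_eq_0_below:
  assumes "k < absdiff m n"
  shows "lqg q m n k = 0"
proof -
  have main: "lqg q m n k = 0" if "n \<le> m" "k < m - n" for m n
  proof -
    obtain c where c: "\<forall>k. (k < m - n \<or> m + n < k) \<longrightarrow> c k = 0"
      "P m * P n = (\<Sum>k\<le>m + n. smult (c k) (P k))"
      using in_lqR_span_lqR_mult[OF \<open>n \<le> m\<close>] unfolding in_lqR_span_def by blast
    then have "is_linearization m n c"
      unfolding is_linearization_def by auto
    then show ?thesis
      using lqg_eqI c(1) \<open>k < m - n\<close> by auto
  qed
  show ?thesis
    using main[of n m] main[of m n] assms lqg_commute[of m n] by (cases "n \<le> m") (auto simp: absdiff_def)
qed

section \<open>Orthogonality\<close>

lemma eigenvalue_pos: "0 < n \<Longrightarrow> 0 < eigenvalue n"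
  using q_power_less_1[of n] q_power_less_1[of "n+1"] by (simp add: eigenvalue_def)

text \<open>The orthogonality measure of the little \<open>q\<close>-Legendre polynomials has mass
  \<open>node_weight j\<close> at \<open>node j\<close>.\<close>

definition node :: "nat \<Rightarrow> real" where
  "node j = 1 - q^j"

definition node_weight :: "nat \<Rightarrow> real" where
  "node_weight j = (1 - q) * q^j"

lemma node_weight_pos: "0 < node_weight j"
  using q_less_1 by (simp add: node_weight_def)

lemma R_weighted_sums: "(\<lambda>j. node_weight j * R n (node j)) sums (if n = 0 then 1 else 0)"
proof (cases "n = 0")
  case True
  have "(\<lambda>j. q^j) sums (1 / (1 - q))"
    using q_pos q_less_1 by (intro geometric_sums) simp
  from sums_mult[OF this, of "1 - q"] show ?thesis
    using True q_less_1 by (simp add: node_weight_def)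
next
  case False
  define F where "F t = R n (1 - t)" for t
  define D where "D t = (1 - t) * (F t - F (t/q))" for t
  text \<open>The \<open>q\<close>-difference equation in divergence form: \<open>eigenvalue n * t * F t = D t - D (q*t)\<close>.\<close>
  have step: "eigenvalue n * (q^j * F (q^j)) = D (q^j) - D (q^Suc j)" for j
    using solves_qdiff_step[OF R_one_minus_solves_qdiff, of "q^j" n]
    by (simp add: F_def D_def algebra_simps)
  have partial: "(\<Sum>j<J. q^j * F (q^j)) = - D (q^J) / eigenvalue n" for J
  proof -
    have "eigenvalue n * (\<Sum>j<J. q^j * F (q^j)) = D 1 - D (q^J)"
      using sum_lessThan_telescope'[of "\<lambda>j. D (q^j)" J] unfolding sum_distrib_left step by simp
    then show ?thesis
      using eigenvalue_pos[of n] False by (simp add: D_def field_simps)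
  qed
  have F_cont: "isCont F 0"
    unfolding F_def by (intro continuous_intros)
  have q_lim: "(\<lambda>J. q^J) \<longlonglongrightarrow> 0"
    using q_pos q_less_1 by (intro LIMSEQ_power_zero) simp
  then have "(\<lambda>J. q^J / q) \<longlonglongrightarrow> 0"
    by (rule tendsto_divide_zero)
  then have "(\<lambda>J. (1 - q^J) * (F (q^J) - F (q^J / q))) \<longlonglongrightarrow> (1 - 0) * (F 0 - F 0)"
    using q_lim by (intro tendsto_mult tendsto_diff tendsto_const isCont_tendsto_compose[OF F_cont])
  then have "(\<lambda>J. D (q^J)) \<longlonglongrightarrow> 0"
    by (simp add: D_def)
  from tendsto_minus[OF tendsto_divide_zero[OF this, of "eigenvalue n"]]
  have "(\<lambda>J. \<Sum>j<J. q^j * F (q^j)) \<longlonglongrightarrow> 0"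
    unfolding partial by simp
  then have "(\<lambda>j. q^j * F (q^j)) sums 0"
    by (simp add: sums_def)
  from sums_mult[OF this, of "1 - q"] show ?thesis
    using False by (simp add: node_weight_def node_def F_def mult.assoc)
qed

lemma orthogonality:
  "(\<lambda>j. node_weight j * (R m (node j) * R n (node j))) sums (if m = n then lqg q m m 0 else 0)"
proof -
  have "(\<lambda>j. \<Sum>l\<le>m+n. lqg q m n l * (node_weight j * R l (node j)))
      sums (\<Sum>l\<le>m+n. lqg q m n l * (if l = 0 then 1 else 0))"
    by (intro sums_sum sums_mult R_weighted_sums)
  moreover have "(\<lambda>j. \<Sum>l\<le>m+n. lqg q m n l * (node_weight j * R l (node j)))
      = (\<lambda>j. node_weight j * (R m (node j) * R n (node j)))"
    by (simp add: R_mult sum_distrib_left algebra_simps)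
  moreover have "(\<Sum>l\<le>m+n. lqg q m n l * (if l = 0 then 1 else 0)) = lqg q m n 0"
    by (simp add: if_distrib sum.delta cong: if_cong)
  moreover have "m \<noteq> n \<Longrightarrow> lqg q m n 0 = 0"
    by (rule lqg_eq_0_below) (auto simp: absdiff_def)
  ultimately show ?thesis by (cases "m = n") auto
qed

lemma lqg_diag_0_pos: "0 < lqg q m m 0"
proof -
  have sums: "(\<lambda>j. node_weight j * (R m (node j) * R m (node j))) sums lqg q m m 0"
    using orthogonality[of m m] by simp
  have "R m 0 \<noteq> 0"
    using qtri_pos[of m] by (simp add: R_at_0)
  then have "0 < R m (node 0) * R m (node 0)"
    unfolding node_def by (simp, metis not_real_square_gt_zero)
  then have pos0: "0 < node_weight 0 * (R m (node 0) * R m (node 0))"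
    using node_weight_pos[of 0] by simp
  have "0 < suminf (\<lambda>j. node_weight j * (R m (node j) * R m (node j)))"
  proof (rule suminf_pos2[OF sums_summable[OF sums] _ pos0])
    show "0 \<le> node_weight j * (R m (node j) * R m (node j))" for j
      using node_weight_pos[of j] by (simp add: mult_nonneg_nonneg)
  qed
  with sums show ?thesis
    by (simp add: sums_iff)
qed

section \<open>Characters at the nodes\<close>

lemma lqh_eq: "lqh q n = (1 - q^(2*n+1)) / ((1 - q) * q^n)"
  by (simp add: lqh_def field_simps)

lemma lqh_pos: "0 < lqh q n"
  using q_power_less_1[of "2*n+1"] q_less_1 by (simp add: lqh_eq)

lemma lqh_0: "lqh q 0 = 1"
  using q_less_1 by (simp add: lqh_def)

lemma lqh_le: "lqh q n \<le> 1 / ((1 - q) * q^n)"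
  using q_less_1 q_power_nonneg[of "2*n+1"] unfolding lqh_eq by (intro divide_right_mono) auto

lemma sum_q_power_absdiff_le: "(\<Sum>n<N. q^(absdiff n j)) \<le> 2 / (1 - q)"
proof -
  have below: "(\<Sum>n<N. if n < j then q^(j-n) else 0) \<le> 1 / (1 - q)"
  proof -
    have "(\<Sum>n<N. if n < j then q^(j-n) else 0) \<le> (\<Sum>n<max N j. if n < j then q^(j-n) else 0)"
      by (rule sum_mono2) auto
    also have "\<dots> = (\<Sum>n<j. q^(j-n))"
      by (subst sum.mono_neutral_right[of "{..<max N j}" "{..<j}"]) auto
    also have "\<dots> = (\<Sum>i<j. q^(Suc i))"
      using sum.nat_diff_reindex[of "\<lambda>n. q^(j-n)" j, symmetric] by (simp add: Suc_diff_Suc)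
    also have "\<dots> \<le> (\<Sum>i<j. q^i)"
      by (intro sum_mono q_power_antimono) auto
    also have "\<dots> \<le> 1 / (1 - q)"
      by (rule geometric_sum_le)
    finally show ?thesis .
  qed
  have above: "(\<Sum>n<N. if j \<le> n then q^(n-j) else 0) \<le> 1 / (1 - q)"
  proof -
    have "(\<Sum>n<N. if j \<le> n then q^(n-j) else 0) \<le> (\<Sum>n<N+j. if j \<le> n then q^(n-j) else 0)"
      by (rule sum_mono2) auto
    also have "\<dots> = (\<Sum>n\<in>{j..<N+j}. q^(n-j))"
      by (rule sum.mono_neutral_cong_right) auto
    also have "\<dots> = (\<Sum>i<N. q^i)"
      using sum.shift_bounds_nat_ivl[of "\<lambda>n. q^(n-j)" 0 j N] by (simp add: atLeast0LessThan)
    also have "\<dots> \<le> 1 / (1 - q)"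
      by (rule geometric_sum_le)
    finally show ?thesis .
  qed
  have "(\<Sum>n<N. q^(absdiff n j))
      = (\<Sum>n<N. if n < j then q^(j-n) else 0) + (\<Sum>n<N. if j \<le> n then q^(n-j) else 0)"
    unfolding sum.distrib[symmetric] by (rule sum.cong) (auto simp: absdiff_def)
  also have "\<dots> \<le> 1 / (1 - q) + 1 / (1 - q)"
    using below above by (rule add_mono)
  finally show ?thesis by simp
qed

lemma weighted_R_at_nodes_bound:
  "\<bar>node_weight j * R n (node j)\<bar> * lqh q n \<le> node_const * q^(absdiff n j)"
proof -
  have "\<bar>node_weight j * R n (node j)\<bar> * lqh q n
      \<le> ((1 - q) * q^j) * (node_const * q^(2*(n-j))) * (1 / ((1 - q) * q^n))"
    using q_less_1 node_const_pos lqh_pos[of n]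
    by (intro mult_mono lqh_le)
       (auto simp: node_weight_def node_def abs_mult intro!: mult_left_mono R_at_nodes_bound)
  also have "\<dots> = node_const * (q^j * q^(2*(n-j)) / q^n)"
    using q_less_1 by (simp add: field_simps)
  also have "q^j * q^(2*(n-j)) / q^n = q^(absdiff n j)"
  proof (cases "n \<le> j")
    case True
    then have "q^j = q^(j-n) * q^n"
      by (metis le_add_diff_inverse2 power_add)
    then show ?thesis using True by (simp add: absdiff_def)
  next
    case False
    then have "j + 2*(n-j) = (n-j) + n"
      by simp
    then have "q^j * q^(2*(n-j)) = q^(n-j) * q^n"
      by (metis power_add)
    then show ?thesis using False by (simp add: absdiff_def)
  qed
  finally show ?thesis by simp
qed

definition char_const :: real where
  "char_const = 2 * node_const / (1 - q)"

lemma weighted_R_at_nodes_norm_le: "(\<Sum>n<N. \<bar>node_weight j * R n (node j)\<bar> * lqh q n) \<le> char_const"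
proof -
  have "(\<Sum>n<N. \<bar>node_weight j * R n (node j)\<bar> * lqh q n) \<le> node_const * (\<Sum>n<N. q^(absdiff n j))"
    unfolding sum_distrib_left by (intro sum_mono weighted_R_at_nodes_bound)
  also have "\<dots> \<le> node_const * (2 / (1 - q))"
    using sum_q_power_absdiff_le node_const_pos by (intro mult_left_mono) auto
  finally show ?thesis by (simp add: char_const_def mult.commute)
qed

lemma R_at_nodes_le: "\<bar>R n (node j)\<bar> \<le> node_const"
  using R_at_nodes_bound[of n j] node_const_pos q_power_le_1[of "2*(n-j)"]
  by (simp add: node_def) (meson mult_left_le order_trans less_imp_le)

lemma R_at_nodes_summable: "summable (\<lambda>n. \<bar>R n (node j)\<bar> * lqh q n)"
proof -
  have "summable (\<lambda>n. \<bar>node_weight j * R n (node j)\<bar> * lqh q n)"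
  proof (rule summableI_nonneg_bounded[where x=char_const])
    show "0 \<le> \<bar>node_weight j * R n (node j)\<bar> * lqh q n" for n
      using lqh_pos[of n] by simp
  qed (rule weighted_R_at_nodes_norm_le)
  then have "summable (\<lambda>n. (1 / node_weight j) * (\<bar>node_weight j * R n (node j)\<bar> * lqh q n))"
    by (rule summable_mult)
  then show ?thesis
    using node_weight_pos[of j] by (simp add: abs_mult)
qed

lemma R_at_nodes_square_summable: "summable (\<lambda>n. (R n (node j))^2 * lqh q n)"
proof (rule summable_comparison_test'[where N=0])
  show "summable (\<lambda>n. node_const * (\<bar>R n (node j)\<bar> * lqh q n))"
    using R_at_nodes_summable by (rule summable_mult)
  show "norm ((R n (node j))^2 * lqh q n) \<le> node_const * (\<bar>R n (node j)\<bar> * lqh q n)" for n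
  proof -
    have "(R n (node j))^2 = \<bar>R n (node j)\<bar> * \<bar>R n (node j)\<bar>"
      by (simp add: power2_eq_square abs_mult[symmetric])
    also have "\<dots> \<le> node_const * \<bar>R n (node j)\<bar>"
      using R_at_nodes_le[of n j] by (intro mult_right_mono) auto
    finally show ?thesis
      using lqh_pos[of n] by (simp add: mult_right_mono mult.assoc)
  qed
qed

text \<open>By the linearization formula, translating the character \<open>\<lambda>n. R n y\<close> by \<open>n\<close> multiplies it
  by \<open>R n y\<close>; dividing by its squared norm therefore makes it idempotent.\<close>

definition char_norm :: "real \<Rightarrow> real" where
  "char_norm y = (\<Sum>n. (R n y)^2 * lqh q n)"

definition normalized_char :: "real \<Rightarrow> nat \<Rightarrow> complex" where
  "normalized_char y n = complex_of_real (R n y / char_norm y)"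

lemma char_norm_pos:
  assumes "summable (\<lambda>n. (R n y)^2 * lqh q n)"
  shows "0 < char_norm y"
  unfolding char_norm_def
proof (rule suminf_pos2[OF assms, of 0])
  show "0 \<le> (R n y)^2 * lqh q n" for n
    using lqh_pos[of n] by simp
  show "0 < (R 0 y)^2 * lqh q 0"
    by (simp add: lqh_0)
qed

lemma lqT_of_real:
  "lqT q n (\<lambda>l. complex_of_real (F l)) m = complex_of_real (\<Sum>l\<le>m + n. lqg q m n l * F l)"
proof -
  have "lqT q n (\<lambda>l. complex_of_real (F l)) m
      = complex_of_real (\<Sum>l = absdiff m n..m + n. lqg q m n l * F l)"
    unfolding lqT_def by simp
  also have "(\<Sum>l = absdiff m n..m + n. lqg q m n l * F l) = (\<Sum>l\<le>m + n. lqg q m n l * F l)"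
    by (rule sum.mono_neutral_left) (auto simp: lqg_eq_0_below)
  finally show ?thesis .
qed

lemma lqT_normalized_char:
  "lqT q n (normalized_char y) k = complex_of_real (R k y * R n y / char_norm y)"
proof -
  have "lqT q n (normalized_char y) k = complex_of_real (\<Sum>l\<le>k + n. lqg q k n l * (R l y / char_norm y))"
    unfolding normalized_char_def by (rule lqT_of_real)
  also have "\<dots> = complex_of_real ((\<Sum>l\<le>k + n. lqg q k n l * R l y) / char_norm y)"
    by (simp add: sum_divide_distrib)
  finally show ?thesis
    by (simp add: R_mult)
qed

lemma idempotent_normalized_char:
  assumes abs_summable: "summable (\<lambda>n. \<bar>R n y\<bar> * lqh q n)"
    and square_summable: "summable (\<lambda>n. (R n y)^2 * lqh q n)"
  shows "idempotent_l1 q (normalized_char y)"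
proof -
  have pos: "0 < char_norm y"
    using square_summable by (rule char_norm_pos)
  have "summable (\<lambda>n. (1 / char_norm y) * (\<bar>R n y\<bar> * lqh q n))"
    using abs_summable by (rule summable_mult)
  then have "normalized_char y \<in> l1h q"
    using pos by (simp add: l1h_def normalized_char_def norm_divide)
  moreover have "lqconv q (normalized_char y) (normalized_char y) n = normalized_char y n" for n
  proof -
    define c where "c = R n y / (char_norm y)^2"
    have "(\<lambda>k. c * ((R k y)^2 * lqh q k)) sums (c * char_norm y)"
      unfolding char_norm_def by (intro sums_mult summable_sums square_summable)
    then have "(\<lambda>k. complex_of_real (c * ((R k y)^2 * lqh q k))) sums complex_of_real (c * char_norm y)"
      by (rule sums_of_real)
    moreover have "complex_of_real (c * char_norm y) = normalized_char y n"
      using pos by (simp add: c_def normalized_char_def power2_eq_square)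
    ultimately have sums: "(\<lambda>k. complex_of_real (c * ((R k y)^2 * lqh q k))) sums normalized_char y n"
      by (simp only:)
    have "(\<lambda>k. lqT q n (normalized_char y) k * normalized_char y k * complex_of_real (lqh q k))
        = (\<lambda>k. complex_of_real (c * ((R k y)^2 * lqh q k)))"
      using pos by (simp add: lqT_normalized_char normalized_char_def c_def power2_eq_square field_simps)
    then show ?thesis
      unfolding lqconv_def using sums by (simp add: sums_iff)
  qed
  ultimately show ?thesis
    unfolding idempotent_l1_def by auto
qed

definition dirac :: "nat \<Rightarrow> nat \<Rightarrow> complex" where
  "dirac m k = (if k = m then 1 else 0)"

lemma dirac_l1h: "dirac m \<in> l1h q"
  unfolding l1h_def dirac_def mem_Collect_eq by (rule summable_finite[of "{m}"]) auto

lemma idempotent_dirac_0: "idempotent_l1 q (dirac 0)"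
proof -
  have "lqconv q (dirac 0) (dirac 0) n = dirac 0 n" for n
  proof -
    have "lqT q n (dirac 0) 0 = complex_of_real (lqg q 0 n n) * dirac 0 n"
      by (simp add: lqT_def absdiff_def)
    also have "\<dots> = dirac 0 n"
      by (cases "n = 0") (auto simp: dirac_def lqg_0_0_0)
    finally have "(\<lambda>k. lqT q n (dirac 0) k * dirac 0 k * complex_of_real (lqh q k))
        = (\<lambda>k. if k = 0 then dirac 0 n else 0)"
      by (auto simp: dirac_def lqh_0)
    then show ?thesis
      unfolding lqconv_def using sums_single[of 0 "\<lambda>_. dirac 0 n"] by (simp add: sums_iff)
  qed
  then show ?thesis
    unfolding idempotent_l1_def using dirac_l1h by auto
qed

section \<open>Approximation by idempotents\<close>

lemma l1h_add:
  assumes "f \<in> l1h q" "g \<in> l1h q"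
  shows "(\<lambda>k. f k + g k) \<in> l1h q"
proof -
  have "summable (\<lambda>k. norm (f k) * lqh q k + norm (g k) * lqh q k)"
    using assms by (intro summable_add) (auto simp: l1h_def)
  then show ?thesis
    unfolding l1h_def mem_Collect_eq
  proof (rule summable_comparison_test'[where N=0])
    fix k
    have "norm (f k + g k) * lqh q k \<le> (norm (f k) + norm (g k)) * lqh q k"
      using lqh_pos[of k] by (intro mult_right_mono norm_triangle_ineq) auto
    then show "norm (norm (f k + g k) * lqh q k) \<le> norm (f k) * lqh q k + norm (g k) * lqh q k"
      using lqh_pos[of k] by (simp add: algebra_simps)
  qed
qed

lemma l1h_scale: "f \<in> l1h q \<Longrightarrow> (\<lambda>k. c * f k) \<in> l1h q"
  unfolding l1h_def using summable_mult[of "\<lambda>k. norm (f k) * lqh q k" "norm c"]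
  by (simp add: norm_mult mult.assoc)

lemma l1h_diff: "f \<in> l1h q \<Longrightarrow> g \<in> l1h q \<Longrightarrow> (\<lambda>k. f k - g k) \<in> l1h q"
  using l1h_add[of f "\<lambda>k. (-1) * g k"] l1h_scale[of g "-1"] by simp

lemma l1h_sum: "finite S \<Longrightarrow> (\<And>i. i \<in> S \<Longrightarrow> F i \<in> l1h q) \<Longrightarrow> (\<lambda>k. \<Sum>i\<in>S. F i k) \<in> l1h q"
proof (induction S rule: finite_induct)
  case empty
  then show ?case by (simp add: l1h_def)
qed (auto intro: l1h_add)

lemma norm1_add_le:
  assumes "f \<in> l1h q" "g \<in> l1h q"
  shows "norm1 q (\<lambda>k. f k + g k) \<le> norm1 q f + norm1 q g"
proof -
  have f: "summable (\<lambda>k. norm (f k) * lqh q k)" and g: "summable (\<lambda>k. norm (g k) * lqh q k)"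
    using assms by (auto simp: l1h_def)
  have "norm1 q (\<lambda>k. f k + g k) \<le> (\<Sum>k. norm (f k) * lqh q k + norm (g k) * lqh q k)"
    unfolding norm1_def
  proof (rule suminf_le)
    show "norm (f k + g k) * lqh q k \<le> norm (f k) * lqh q k + norm (g k) * lqh q k" for k
      using lqh_pos[of k] norm_triangle_ineq[of "f k" "g k"]
      by (simp add: distrib_right[symmetric] mult_right_mono)
    show "summable (\<lambda>k. norm (f k + g k) * lqh q k)"
      using l1h_add[OF assms] by (simp add: l1h_def)
  qed (use f g in \<open>rule summable_add\<close>)
  also have "\<dots> = norm1 q f + norm1 q g"
    unfolding norm1_def using f g by (rule suminf_add[symmetric])
  finally show ?thesis .
qed

lemma norm1_scale: "f \<in> l1h q \<Longrightarrow> norm1 q (\<lambda>k. c * f k) = norm c * norm1 q f"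
  unfolding norm1_def l1h_def using suminf_mult[of "\<lambda>k. norm (f k) * lqh q k" "norm c"]
  by (simp add: norm_mult mult.assoc)

lemma norm1_triangle:
  assumes "f \<in> l1h q" "g \<in> l1h q" "h \<in> l1h q"
  shows "norm1 q (\<lambda>k. f k - h k) \<le> norm1 q (\<lambda>k. f k - g k) + norm1 q (\<lambda>k. g k - h k)"
  using norm1_add_le[OF l1h_diff[OF assms(1,2)] l1h_diff[OF assms(2,3)]] by simp

definition in_idem_span :: "(nat \<Rightarrow> complex) \<Rightarrow> bool" where
  "in_idem_span \<phi> \<longleftrightarrow> (\<exists>N (c :: nat \<Rightarrow> complex) (e :: nat \<Rightarrow> nat \<Rightarrow> complex).
     (\<forall>i<N. idempotent_l1 q (e i)) \<and> \<phi> = (\<lambda>k. \<Sum>i<N. c i * e i k))"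

lemma in_idem_span_l1h: "in_idem_span \<phi> \<Longrightarrow> \<phi> \<in> l1h q"
  unfolding in_idem_span_def idempotent_l1_def by (auto intro!: l1h_sum l1h_scale)

lemma in_idem_span_zero: "in_idem_span (\<lambda>k. 0)"
  unfolding in_idem_span_def by (intro exI[of _ 0]) simp

lemma in_idem_span_idempotent: "idempotent_l1 q e \<Longrightarrow> in_idem_span (\<lambda>k. c * e k)"
  unfolding in_idem_span_def by (intro exI[of _ 1] exI[of _ "\<lambda>_. c"] exI[of _ "\<lambda>_. e"]) simp

lemma in_idem_span_scale:
  assumes "in_idem_span \<phi>"
  shows "in_idem_span (\<lambda>k. a * \<phi> k)"
proof -
  obtain N :: nat and c e where "\<forall>i<N. idempotent_l1 q (e i)" "\<phi> = (\<lambda>k. \<Sum>i<N. c i * e i k)"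
    using assms unfolding in_idem_span_def by blast
  then show ?thesis
    unfolding in_idem_span_def
    by (intro exI[of _ N] exI[of _ "\<lambda>i. a * c i"] exI[of _ e]) (simp add: sum_distrib_left mult.assoc)
qed

lemma in_idem_span_add:
  assumes "in_idem_span \<phi>" "in_idem_span \<psi>"
  shows "in_idem_span (\<lambda>k. \<phi> k + \<psi> k)"
proof -
  obtain N :: nat and c e where \<phi>: "\<forall>i<N. idempotent_l1 q (e i)" "\<phi> = (\<lambda>k. \<Sum>i<N. c i * e i k)"
    using assms(1) unfolding in_idem_span_def by blast
  obtain M :: nat and d f where \<psi>: "\<forall>i<M. idempotent_l1 q (f i)" "\<psi> = (\<lambda>k. \<Sum>i<M. d i * f i k)"
    using assms(2) unfolding in_idem_span_def by blast
  define c' where "c' i = (if i < N then c i else d (i - N))" for i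
  define e' where "e' i = (if i < N then e i else f (i - N))" for i
  have "\<forall>i<N+M. idempotent_l1 q (e' i)"
    using \<phi> \<psi> by (auto simp: e'_def)
  moreover have "(\<lambda>k. \<phi> k + \<psi> k) = (\<lambda>k. \<Sum>i<N+M. c' i * e' i k)"
    unfolding sum_lessThan_add_split \<phi> \<psi> by (auto simp: c'_def e'_def)
  ultimately show ?thesis
    unfolding in_idem_span_def by blast
qed

lemma in_idem_span_sum:
  "finite S \<Longrightarrow> (\<And>i. i \<in> S \<Longrightarrow> in_idem_span (F i)) \<Longrightarrow> in_idem_span (\<lambda>k. \<Sum>i\<in>S. F i k)"
  by (induction S rule: finite_induct) (auto intro: in_idem_span_add in_idem_span_zero)

definition approximable :: "(nat \<Rightarrow> complex) \<Rightarrow> bool" where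
  "approximable g \<longleftrightarrow> (\<forall>\<epsilon>>0. \<exists>\<phi>. in_idem_span \<phi> \<and> norm1 q (\<lambda>k. g k - \<phi> k) < \<epsilon>)"

lemma approximable_zero: "approximable (\<lambda>k. 0)"
  unfolding approximable_def using in_idem_span_zero
  by (intro allI impI exI[of _ "\<lambda>k. 0"]) (simp add: norm1_def)

lemma approximable_scale:
  assumes "approximable g" "g \<in> l1h q"
  shows "approximable (\<lambda>k. a * g k)"
proof (cases "a = 0")
  case True
  then show ?thesis using approximable_zero by simp
next
  case False
  show ?thesis
    unfolding approximable_def
  proof (intro allI impI)
    fix \<epsilon> :: real
    assume "0 < \<epsilon>"
    then have "0 < \<epsilon> / norm a"
      using False by simp
    then obtain \<phi> where \<phi>: "in_idem_span \<phi>" "norm1 q (\<lambda>k. g k - \<phi> k) < \<epsilon> / norm a"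
      using assms(1) unfolding approximable_def by blast
    have "norm1 q (\<lambda>k. a * g k - a * \<phi> k) = norm a * norm1 q (\<lambda>k. g k - \<phi> k)"
      using norm1_scale[OF l1h_diff[OF assms(2) in_idem_span_l1h[OF \<phi>(1)]], of a]
      by (simp add: algebra_simps)
    also have "\<dots> < \<epsilon>"
      using \<phi>(2) False by (simp add: field_simps)
    finally show "\<exists>\<psi>. in_idem_span \<psi> \<and> norm1 q (\<lambda>k. a * g k - \<psi> k) < \<epsilon>"
      using in_idem_span_scale[OF \<phi>(1), of a] by blast
  qed
qed

lemma approximable_add:
  assumes "approximable g1" "approximable g2" "g1 \<in> l1h q" "g2 \<in> l1h q"
  shows "approximable (\<lambda>k. g1 k + g2 k)"
  unfolding approximable_def
proof (intro allI impI)
  fix \<epsilon> :: real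
  assume "0 < \<epsilon>"
  then obtain \<phi>1 \<phi>2 where \<phi>1: "in_idem_span \<phi>1" "norm1 q (\<lambda>k. g1 k - \<phi>1 k) < \<epsilon>/2"
    and \<phi>2: "in_idem_span \<phi>2" "norm1 q (\<lambda>k. g2 k - \<phi>2 k) < \<epsilon>/2"
    using assms(1,2) unfolding approximable_def by (meson half_gt_zero)
  have "norm1 q (\<lambda>k. g1 k + g2 k - (\<phi>1 k + \<phi>2 k)) = norm1 q (\<lambda>k. (g1 k - \<phi>1 k) + (g2 k - \<phi>2 k))"
    by (simp add: algebra_simps)
  also have "\<dots> \<le> norm1 q (\<lambda>k. g1 k - \<phi>1 k) + norm1 q (\<lambda>k. g2 k - \<phi>2 k)"
    using assms(3,4) in_idem_span_l1h[OF \<phi>1(1)] in_idem_span_l1h[OF \<phi>2(1)]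
    by (intro norm1_add_le l1h_diff)
  also have "\<dots> < \<epsilon>"
    using \<phi>1(2) \<phi>2(2) by simp
  finally show "\<exists>\<phi>. in_idem_span \<phi> \<and> norm1 q (\<lambda>k. g1 k + g2 k - \<phi> k) < \<epsilon>"
    using in_idem_span_add[OF \<phi>1(1) \<phi>2(1)] by blast
qed

lemma approximable_sum:
  "finite S \<Longrightarrow> (\<And>i. i \<in> S \<Longrightarrow> approximable (F i) \<and> F i \<in> l1h q) \<Longrightarrow> approximable (\<lambda>k. \<Sum>i\<in>S. F i k)"
proof (induction S rule: finite_induct)
  case (insert x S)
  then have "approximable (\<lambda>k. F x k + (\<Sum>i\<in>S. F i k))"
    by (intro approximable_add l1h_sum) auto
  with insert show ?case by simp
qed (simp add: approximable_zero)

lemma approximable_limit: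
  assumes "g \<in> l1h q"
    and "\<And>\<epsilon>. 0 < \<epsilon> \<Longrightarrow> \<exists>g'. approximable g' \<and> g' \<in> l1h q \<and> norm1 q (\<lambda>k. g k - g' k) < \<epsilon>"
  shows "approximable g"
  unfolding approximable_def
proof (intro allI impI)
  fix \<epsilon> :: real
  assume "0 < \<epsilon>"
  then obtain g' where g': "approximable g'" "g' \<in> l1h q" "norm1 q (\<lambda>k. g k - g' k) < \<epsilon>/2"
    using assms(2) by (meson half_gt_zero)
  then obtain \<phi> where \<phi>: "in_idem_span \<phi>" "norm1 q (\<lambda>k. g' k - \<phi> k) < \<epsilon>/2"
    using \<open>0 < \<epsilon>\<close> unfolding approximable_def by (meson half_gt_zero)
  have "norm1 q (\<lambda>k. g k - \<phi> k) \<le> norm1 q (\<lambda>k. g k - g' k) + norm1 q (\<lambda>k. g' k - \<phi> k)"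
    using assms(1) g'(2) in_idem_span_l1h[OF \<phi>(1)] by (rule norm1_triangle)
  also have "\<dots> < \<epsilon>"
    using g'(3) \<phi>(2) by simp
  finally show "\<exists>\<phi>. in_idem_span \<phi> \<and> norm1 q (\<lambda>k. g k - \<phi> k) < \<epsilon>"
    using \<phi>(1) by blast
qed

definition coeff_abs_sum :: "nat \<Rightarrow> real" where
  "coeff_abs_sum m = (\<Sum>k\<le>m. \<bar>expansion_coeff m k\<bar>)"

lemma R_at_nodes_minus_1_bound: "\<bar>R m (node j) - 1\<bar> \<le> coeff_abs_sum m * q^j"
proof -
  have "R m (node j) - 1 = (\<Sum>k<m. expansion_coeff m (Suc k) * (q^j)^(Suc k))"
    unfolding node_def R_one_minus by (simp add: sum.atMost_shift)
  also have "\<bar>\<dots>\<bar> \<le> (\<Sum>k<m. \<bar>expansion_coeff m (Suc k)\<bar> * q^j)"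
  proof (rule order_trans[OF sum_abs sum_mono])
    fix k
    have "(q^j)^(Suc k) \<le> q^j"
      unfolding power_mult[symmetric] by (intro q_power_antimono) simp
    then show "\<bar>expansion_coeff m (Suc k) * (q^j)^(Suc k)\<bar> \<le> \<bar>expansion_coeff m (Suc k)\<bar> * q^j"
      by (simp add: abs_mult mult_left_mono)
  qed
  also have "\<dots> \<le> coeff_abs_sum m * q^j"
    unfolding coeff_abs_sum_def sum_distrib_right[symmetric]
    by (intro mult_right_mono) (simp_all add: sum.atMost_shift)
  finally show ?thesis .
qed

lemma weighted_R_at_nodes_le: "\<bar>node_weight j * R n (node j)\<bar> \<le> node_const"
proof -
  have "node_weight j \<le> 1"
    using q_pos q_power_le_1[of j] by (simp add: node_weight_def mult_le_one)
  then have "node_weight j * \<bar>R n (node j)\<bar> \<le> 1 * node_const"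
    using R_at_nodes_le[of n j] node_weight_pos[of j] by (intro mult_mono) auto
  then show ?thesis
    using node_weight_pos[of j] by (simp add: abs_mult)
qed

lemma in_idem_span_weighted_R_at_nodes:
  "in_idem_span (\<lambda>k. complex_of_real (c * (node_weight j * R k (node j))))"
proof -
  have char: "idempotent_l1 q (normalized_char (node j))" "0 < char_norm (node j)"
    using idempotent_normalized_char[OF R_at_nodes_summable R_at_nodes_square_summable]
      char_norm_pos[OF R_at_nodes_square_summable] by auto
  have "(\<lambda>k. complex_of_real (c * (node_weight j * R k (node j))))
      = (\<lambda>k. complex_of_real (c * node_weight j * char_norm (node j)) * normalized_char (node j) k)"
    using char(2) by (simp add: normalized_char_def flip: of_real_mult of_real_divide)
  then show ?thesis
    using in_idem_span_idempotent[OF char(1)] by simp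
qed

lemma dirac_expansion_tail_sums:
  "(\<lambda>i. (R m (node (i+N)) - 1) * (node_weight (i+N) * R n (node (i+N)))) sums
     ((if m = n then lqg q m m 0 else 0) - (if n = 0 then 1 else 0)
      - (\<Sum>j<N. (R m (node j) - 1) * (node_weight j * R n (node j))))"
proof -
  have "(\<lambda>j. node_weight j * (R m (node j) * R n (node j)) - node_weight j * R n (node j))
      sums ((if m = n then lqg q m m 0 else 0) - (if n = 0 then 1 else 0))"
    by (intro sums_diff orthogonality R_weighted_sums)
  then have "(\<lambda>j. (R m (node j) - 1) * (node_weight j * R n (node j)))
      sums ((if m = n then lqg q m m 0 else 0) - (if n = 0 then 1 else 0))"
    by (simp add: algebra_simps)
  then show ?thesis
    using sums_iff_shift[of "\<lambda>j. (R m (node j) - 1) * (node_weight j * R n (node j))" N] by simp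
qed

lemma dirac_expansion_error_le:
  fixes m N :: nat
  defines "E \<equiv> \<lambda>n. (if m = n then lqg q m m 0 else 0) - (if n = 0 then 1 else 0)
                   - (\<Sum>j<N. (R m (node j) - 1) * (node_weight j * R n (node j)))"
  shows "(\<Sum>n. \<bar>E n\<bar> * lqh q n) \<le> char_const * coeff_abs_sum m * q^N / (1 - q)"
proof -
  define a where "a i = R m (node (i+N)) - 1" for i
  define u where "u i n = node_weight (i+N) * R n (node (i+N))" for i n
  have E_eq: "E n = (\<Sum>i. a i * u i n)" for n
    using dirac_expansion_tail_sums[of m N n] by (simp add: E_def a_def u_def sums_iff)
  have a_le: "\<bar>a i\<bar> \<le> coeff_abs_sum m * q^N * q^i" for i
    using R_at_nodes_minus_1_bound[of m "i+N"] by (simp add: a_def power_add mult_ac)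
  have geometric: "(\<lambda>i. coeff_abs_sum m * q^N * q^i) sums (coeff_abs_sum m * q^N * (1 / (1 - q)))"
    using q_pos q_less_1 by (intro sums_mult geometric_sums) simp
  have a_summable: "summable (\<lambda>i. \<bar>a i\<bar>)"
    using a_le by (intro summable_comparison_test'[OF sums_summable[OF geometric], of 0]) simp
  have "(\<Sum>n. \<bar>E n\<bar> * lqh q n) \<le> char_const * (\<Sum>i. \<bar>a i\<bar>)"
    unfolding E_eq
  proof (rule weighted_series_norm_le(2)[OF a_summable])
    show "0 \<le> lqh q n" for n using lqh_pos[of n] by simp
    show "\<bar>u i n\<bar> \<le> node_const" for i n unfolding u_def by (rule weighted_R_at_nodes_le)
    show "(\<Sum>n<K. \<bar>u i n\<bar> * lqh q n) \<le> char_const" for i K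
      unfolding u_def by (rule weighted_R_at_nodes_norm_le)
  qed
  also have "\<dots> \<le> char_const * (coeff_abs_sum m * q^N * (1 / (1 - q)))"
    using a_le a_summable geometric node_const_pos q_less_1
    by (intro mult_left_mono suminf_le[OF _ a_summable sums_summable[OF geometric], THEN order_trans])
       (auto simp: sums_iff char_const_def)
  finally show ?thesis by simp
qed

lemma approximable_scaled_dirac: "approximable (\<lambda>k. complex_of_real (lqg q m m 0) * dirac m k)"
  unfolding approximable_def
proof (intro allI impI)
  fix \<epsilon> :: real
  assume "0 < \<epsilon>"
  define C where "C = char_const * coeff_abs_sum m / (1 - q)"
  have "0 \<le> C"
    using node_const_pos q_less_1 by (simp add: C_def char_const_def coeff_abs_sum_def)
  obtain N where N: "q^N < \<epsilon> / (C + 1)"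
    using real_arch_pow_inv[of "\<epsilon> / (C + 1)" q] \<open>0 < \<epsilon>\<close> \<open>0 \<le> C\<close> q_less_1 by auto
  define \<phi> where "\<phi> k = complex_of_real (\<Sum>j<N. (R m (node j) - 1) * (node_weight j * R k (node j)))
                       + dirac 0 k" for k
  have "in_idem_span \<phi>"
    unfolding \<phi>_def of_real_sum
    by (intro in_idem_span_add in_idem_span_sum in_idem_span_weighted_R_at_nodes)
       (use in_idem_span_idempotent[OF idempotent_dirac_0, of 1] in simp_all)
  moreover have "norm1 q (\<lambda>k. complex_of_real (lqg q m m 0) * dirac m k - \<phi> k) < \<epsilon>"
  proof -
    define E where "E n = (if m = n then lqg q m m 0 else 0) - (if n = 0 then 1 else 0)
               - (\<Sum>j<N. (R m (node j) - 1) * (node_weight j * R n (node j)))" for n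
    have "complex_of_real (lqg q m m 0) * dirac m k - \<phi> k = complex_of_real (E k)" for k
      by (simp add: E_def \<phi>_def dirac_def)
    then have "norm1 q (\<lambda>k. complex_of_real (lqg q m m 0) * dirac m k - \<phi> k) = (\<Sum>n. \<bar>E n\<bar> * lqh q n)"
      by (simp add: norm1_def)
    also have "\<dots> \<le> C * q^N"
      using dirac_expansion_error_le[of m N] by (simp add: C_def E_def)
    also have "\<dots> \<le> C * (\<epsilon> / (C + 1))"
      using N \<open>0 \<le> C\<close> by (intro mult_left_mono) auto
    also have "\<dots> < \<epsilon>"
      using \<open>0 < \<epsilon>\<close> \<open>0 \<le> C\<close> by (simp add: field_simps)
    finally show ?thesis .
  qed
  ultimately show "\<exists>\<phi>. in_idem_span \<phi> \<and> norm1 q (\<lambda>k. complex_of_real (lqg q m m 0) * dirac m k - \<phi> k) < \<epsilon>"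
    by blast
qed

lemma approximable_dirac: "approximable (dirac m)"
proof -
  have "approximable (\<lambda>k. complex_of_real (1 / lqg q m m 0) * (complex_of_real (lqg q m m 0) * dirac m k))"
    by (intro approximable_scale approximable_scaled_dirac l1h_scale dirac_l1h)
  moreover have "lqg q m m 0 \<noteq> 0"
    using lqg_diag_0_pos[of m] by simp
  ultimately show ?thesis
    by (simp add: of_real_divide)
qed

lemma approximable_l1h:
  assumes f: "f \<in> l1h q"
  shows "approximable f"
proof (rule approximable_limit[OF f])
  fix \<epsilon> :: real
  assume "0 < \<epsilon>"
  define x where "x = (\<lambda>k. norm (f k) * lqh q k)"
  have "summable x"
    using f by (simp add: l1h_def x_def)
  then obtain M where M: "\<forall>n\<ge>M. norm (\<Sum>i. x (i + n)) < \<epsilon>"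
    using suminf_exist_split[OF \<open>0 < \<epsilon>\<close>] by blast
  define g where "g k = (\<Sum>m<M. f m * dirac m k)" for k
  have "approximable g" "g \<in> l1h q"
    unfolding g_def
    by (auto intro!: approximable_sum l1h_sum approximable_scale approximable_dirac dirac_l1h l1h_scale)
  moreover have "norm1 q (\<lambda>k. f k - g k) < \<epsilon>"
  proof -
    have tail: "f k - g k = (if k < M then 0 else f k)" for k
      by (simp add: g_def dirac_def if_distrib sum.delta' cong: if_cong)
    have "norm1 q (\<lambda>k. f k - g k) = (\<Sum>k. if k < M then 0 else x k)"
      unfolding norm1_def tail x_def by (rule arg_cong[where f=suminf]) auto
    also have "\<dots> = (\<Sum>i. x (i + M))"
    proof -
      have "(\<lambda>i. (\<lambda>k. if k < M then 0 else x k) (i + M)) sums (\<Sum>i. x (i + M))"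
        using \<open>summable x\<close> by (simp add: summable_sums summable_iff_shift)
      then have "(\<lambda>k. if k < M then 0 else x k) sums (\<Sum>i. x (i + M))"
        by (subst (asm) sums_iff_shift) simp
      then show ?thesis by (simp add: sums_iff)
    qed
    also have "\<dots> < \<epsilon>"
      using M by (metis order_refl real_norm_def abs_less_iff)
    finally show ?thesis .
  qed
  ultimately show "\<exists>g. approximable g \<and> g \<in> l1h q \<and> norm1 q (\<lambda>k. f k - g k) < \<epsilon>"
    by blast
qed

end

theorem theorem3p1:
  fixes q :: real
  assumes "0 < q" and "q < 1"
  shows "\<forall>f \<in> l1h q. \<forall>\<epsilon> > 0. \<exists>(N::nat) (c :: nat \<Rightarrow> complex) (e :: nat \<Rightarrow> nat \<Rightarrow> complex).
           (\<forall>i < N. idempotent_l1 q (e i)) \<and>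
           norm1 q (\<lambda>k. f k - (\<Sum>i<N. c i * e i k)) < \<epsilon>"
proof (intro ballI allI impI)
  interpret little_q_legendre q
    using assms by unfold_locales
  fix f and \<epsilon> :: real
  assume "f \<in> l1h q" "0 < \<epsilon>"
  then obtain \<phi> where "in_idem_span \<phi>" "norm1 q (\<lambda>k. f k - \<phi> k) < \<epsilon>"
    using approximable_l1h unfolding approximable_def by blast
  moreover obtain N :: nat and c e
    where "\<forall>i < N. idempotent_l1 q (e i)" "\<phi> = (\<lambda>k. \<Sum>i<N. c i * e i k)"
    using \<open>in_idem_span \<phi>\<close> unfolding in_idem_span_def by blast
  ultimately show "\<exists>(N::nat) (c :: nat \<Rightarrow> complex) (e :: nat \<Rightarrow> nat \<Rightarrow> complex).
      (\<forall>i < N. idempotent_l1 q (e i)) \<and> norm1 q (\<lambda>k. f k - (\<Sum>i<N. c i * e i k)) < \<epsilon>"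
    by (intro exI[of _ N] exI[of _ c] exI[of _ e]) simp
qed

end
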